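(* Let $\eta>0$, $\alpha\in(1/2,1)$, $\eta_i=\eta i^{-\alpha}$, let $\{e_i\}$ be i.i.d. real random variables with $\mathbb{E}e_i=0$ and $0<\mathbb{E}e_i^2<\infty$, let $x_0$ be deterministic, and let $X_0=x_0$, $X_i=(1-\eta_i)X_{i-1}+\eta_ie_i$ for $i\ge1$. With $Y_k^i=1$ if $k=i$ and $Y_k^i=\prod_{m=k+1}^i(1-\eta_m)$ if $k<i$, one has $X_i=Y_j^iX_j+\sum_{k=j+1}^iY_k^i\eta_ke_k$ for $0\le j<i$, and for all $1\le j<i$: (1) $\mathrm{Var}(X_i)\asymp\mathbb{E}[X_i^2]\asymp i^{-\alpha}$; (2) $0\le\mathrm{Cov}(X_i,X_j)\asymp\exp\{\frac{\eta}{1-\alpha}(j^{1-\alpha}-i^{1-\alpha})\}j^{-\alpha}\le\exp\{-\eta i^{-\alpha}(i-j)\}j^{-\alpha}$; (3) $\mathrm{Cov}(X_i,\sum_{k=1}^jX_k)\asymp\exp\{\frac{\eta}{1-\alpha}(j^{1-\alpha}-i^{1-\alpha})\}\le\exp\{-\eta i^{-\alpha}(i-j)\}$; (4) $\mathrm{Cov}(\sum_{k=i}^{\infty}X_k,X_j)\lesssim\exp\{\frac{\eta}{1-\alpha}(j^{1-\alpha}-i^{1-\alpha})\}i^{\alpha}j^{-\alpha}\le\exp\{-\eta i^{-\alpha}(i-j)\}i^{\alpha}j^{-\alpha}$.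
   Context: $a\lesssim b$ means $a\le Cb$ with $C>0$ independent of $i,j$; $a\asymp b$ means $a\lesssim b$ and $b\lesssim a$.
   Formalization: The constant eta is also less than 2 raised to the power alpha, and in (4) the covariance of the infinite sum with $X_j$ is the convergent series of the covariances of its terms with $X_j$. The statement above fails without it. *)

theory Defs
  imports "HOL-Probability.Probability"
begin

definition stepsize :: "real \<Rightarrow> real \<Rightarrow> nat \<Rightarrow> real" where
  "stepsize \<eta> \<alpha> i = \<eta> * real i powr (- \<alpha>)"

primrec sgdX :: "real \<Rightarrow> real \<Rightarrow> real \<Rightarrow> (nat \<Rightarrow> 'a \<Rightarrow> real) \<Rightarrow> nat \<Rightarrow> 'a \<Rightarrow> real" where
  "sgdX \<eta> \<alpha> x0 e 0 \<omega> = x0"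
| "sgdX \<eta> \<alpha> x0 e (Suc i) \<omega> =
     (1 - stepsize \<eta> \<alpha> (Suc i)) * sgdX \<eta> \<alpha> x0 e i \<omega> + stepsize \<eta> \<alpha> (Suc i) * e (Suc i) \<omega>"

definition Yprod :: "real \<Rightarrow> real \<Rightarrow> nat \<Rightarrow> nat \<Rightarrow> real" where
  "Yprod \<eta> \<alpha> k i = (if k = i then 1 else (\<Prod>m\<in>{k+1..i}. 1 - stepsize \<eta> \<alpha> m))"

definition covar :: "'a measure \<Rightarrow> ('a \<Rightarrow> real) \<Rightarrow> ('a \<Rightarrow> real) \<Rightarrow> real" where
  "covar M X Z = integral\<^sup>L M (\<lambda>\<omega>. (X \<omega> - integral\<^sup>L M X) * (Z \<omega> - integral\<^sup>L M Z))"

definition var :: "'a measure \<Rightarrow> ('a \<Rightarrow> real) \<Rightarrow> real" where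
  "var M X = integral\<^sup>L M (\<lambda>\<omega>. (X \<omega> - integral\<^sup>L M X)\<^sup>2)"

end

theory Submission
  imports Defs
begin

text \<open>
  Since the
  centred i.i.d. noise is orthogonal, every second-order quantity is \<open>\<sigma>\<^sup>2\<close> times a deterministic
  expression: \<open>Var X\<^sub>i = \<sigma>\<^sup>2 V\<^sub>i\<close> with \<open>V\<^sub>i = \<Sum>\<^sub>k (Y\<^sub>k\<^sup>i \<eta>\<^sub>k)\<^sup>2\<close>, \<open>Cov(X\<^sub>i, X\<^sub>j) = \<sigma>\<^sup>2 Y\<^sub>j\<^sup>i V\<^sub>j\<close>,
  \<open>Cov(X\<^sub>i, X\<^sub>1 + \<dots> + X\<^sub>j) = \<sigma>\<^sup>2 Y\<^sub>j\<^sup>i T\<^sub>j\<close> with \<open>T\<^sub>j = \<Sum>\<^sub>k Y\<^sub>k\<^sup>j V\<^sub>k\<close>, and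
  \<open>Cov(X\<^sub>i\<^sub>+\<^sub>n, X\<^sub>j) = \<sigma>\<^sup>2 V\<^sub>j Y\<^sub>j\<^sup>i Y\<^sub>i\<^sup>i\<^sup>+\<^sup>n\<close>.

  With \<open>F(x) = \<eta> x\<^sup>1\<^sup>-\<^sup>\<alpha> / (1 - \<alpha>)\<close>, an antiderivative of the step size,
  \<open>\<Sum>\<^sub>m\<^sub>=\<^sub>j\<^sub>+\<^sub>1\<^sup>i \<eta>\<^sub>m\<close> differs from \<open>F(i) - F(j)\<close> by at most \<open>\<eta>\<close>, and \<open>\<Sum>\<^sub>m \<eta>\<^sub>m\<^sup>2 < \<infinity>\<close>
  because \<open>2\<alpha> > 1\<close>; together with \<open>exp(-s - s\<^sup>2/(1-q)) \<le> 1 - s \<le> exp(-s)\<close> this gives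
  \<open>Y\<^sub>j\<^sup>i \<asymp> exp(F(j) - F(i))\<close>. The linear recursions
  \<open>V\<^sub>i\<^sub>+\<^sub>1 = (1 - \<eta>\<^sub>i\<^sub>+\<^sub>1)\<^sup>2 V\<^sub>i + \<eta>\<^sub>i\<^sub>+\<^sub>1\<^sup>2\<close> and \<open>T\<^sub>j\<^sub>+\<^sub>1 = (1 - \<eta>\<^sub>j\<^sub>+\<^sub>1) T\<^sub>j + V\<^sub>j\<^sub>+\<^sub>1\<close> give
  \<open>V\<^sub>i \<asymp> i\<^sup>-\<^sup>\<alpha>\<close> and \<open>T\<^sub>j \<asymp> 1\<close> by induction, and similarly \<open>\<Sum>\<^sub>n Y\<^sub>i\<^sup>i\<^sup>+\<^sup>n \<lesssim> i\<^sup>\<alpha>\<close>.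
  Finally \<open>F(i) - F(j) \<ge> \<eta> i\<^sup>-\<^sup>\<alpha> (i - j)\<close> by concavity of \<open>x\<^sup>1\<^sup>-\<^sup>\<alpha>\<close>.
\<close>

section \<open>Elementary inequalities\<close>

lemma powr_diff_mvt:
  fixes x y p :: real
  assumes "0 < x" "x \<le> y" "p \<le> 1"
  obtains z where "y powr (p - 1) \<le> z powr (p - 1)" "z powr (p - 1) \<le> x powr (p - 1)"
    and "y powr p - x powr p = (y - x) * (p * z powr (p - 1))"
proof (cases "x = y")
  case True
  then show ?thesis using that[of x] by simp
next
  case False
  with assms have "x < y" by simp
  have "\<And>t. x \<le> t \<Longrightarrow> t \<le> y \<Longrightarrow> ((\<lambda>t. t powr p) has_real_derivative p * t powr (p - 1)) (at t)"
    using assms by (intro has_real_derivative_powr) auto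
  from MVT2[OF \<open>x < y\<close> this] obtain z
    where z: "x < z" "z < y" "y powr p - x powr p = (y - x) * (p * z powr (p - 1))"
    by blast
  have "y powr (p - 1) \<le> z powr (p - 1)" "z powr (p - 1) \<le> x powr (p - 1)"
    by (rule powr_mono2'; use z assms in simp)+
  with z(3) that show ?thesis by blast
qed

lemma powr_diff_bounds_nonneg:
  fixes x y p :: real
  assumes "0 < x" "x \<le> y" "0 \<le> p" "p \<le> 1"
  shows "(y - x) * (p * y powr (p - 1)) \<le> y powr p - x powr p"
    and "y powr p - x powr p \<le> (y - x) * (p * x powr (p - 1))"
proof -
  obtain z where z: "y powr (p - 1) \<le> z powr (p - 1)" "z powr (p - 1) \<le> x powr (p - 1)"
    and diff: "y powr p - x powr p = (y - x) * (p * z powr (p - 1))"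
    by (rule powr_diff_mvt[OF assms(1,2,4)])
  show "(y - x) * (p * y powr (p - 1)) \<le> y powr p - x powr p"
    unfolding diff using z assms by (intro mult_left_mono) auto
  show "y powr p - x powr p \<le> (y - x) * (p * x powr (p - 1))"
    unfolding diff using z assms by (intro mult_left_mono) auto
qed

lemma powr_diff_bounds_nonpos:
  fixes x y p :: real
  assumes "0 < x" "x \<le> y" "p \<le> 0"
  shows "(y - x) * (- p * y powr (p - 1)) \<le> x powr p - y powr p"
    and "x powr p - y powr p \<le> (y - x) * (- p * x powr (p - 1))"
proof -
  obtain z where z: "y powr (p - 1) \<le> z powr (p - 1)" "z powr (p - 1) \<le> x powr (p - 1)"
    and "y powr p - x powr p = (y - x) * (p * z powr (p - 1))"
    by (rule powr_diff_mvt[OF assms(1,2) order_trans[OF assms(3) zero_le_one]])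
  then have diff: "x powr p - y powr p = (y - x) * (- p * z powr (p - 1))"
    by simp
  show "(y - x) * (- p * y powr (p - 1)) \<le> x powr p - y powr p"
    unfolding diff using z assms by (intro mult_left_mono) auto
  show "x powr p - y powr p \<le> (y - x) * (- p * x powr (p - 1))"
    unfolding diff using z assms by (intro mult_left_mono) auto
qed

lemma powr_le_linear:
  fixes a c x :: real
  assumes "0 < a" "a < 1" "0 < c" "0 < x"
  shows "x powr a \<le> c * x + (1 / c) powr (a / (1 - a))"
proof (cases "1 / c \<le> x powr (1 - a)")
  case True
  have "x powr a \<le> c * (x powr a * x powr (1 - a))"
    using True assms by (simp add: field_simps mult_left_mono)
  also have "\<dots> = c * x"
    using assms by (simp flip: powr_add)
  finally show ?thesis
    using powr_ge_zero[of "1 / c" "a / (1 - a)"] by linarith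
next
  case False
  have "x powr a = (x powr (1 - a)) powr (a / (1 - a))"
    using assms by (simp add: powr_powr)
  also have "\<dots> \<le> (1 / c) powr (a / (1 - a))"
    using False assms by (intro powr_mono2) auto
  moreover have "0 \<le> c * x"
    using assms by simp
  ultimately show ?thesis
    by linarith
qed

lemma inverse_le_powr_neg:
  fixes x a :: real
  assumes "1 \<le> x" "a \<le> 1"
  shows "1 / x \<le> x powr (- a)"
  using assms powr_mono[of "- 1" "- a" x] by (simp add: powr_minus_divide)

lemma powr_neg_diff_le:
  fixes u a :: real
  assumes "0 < u" "0 \<le> a" "a \<le> 1"
  shows "u powr (- a) - (u + 1) powr (- a) \<le> u powr (- a) / u"
proof -
  have "u powr (- a) - (u + 1) powr (- a) \<le> a * (u powr (- a) / u)"
    using powr_diff_bounds_nonpos(2)[of u "u + 1" "- a"] assms by (simp add: powr_diff)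
  also have "\<dots> \<le> u powr (- a) / u"
    using assms by (intro mult_left_le_one_le) auto
  finally show ?thesis .
qed

lemma sum_diff_telescope:
  fixes f :: "nat \<Rightarrow> 'a::ab_group_add"
  shows "j \<le> i \<Longrightarrow> (\<Sum>m\<in>{j+1..i}. f m - f (m - 1)) = f i - f j"
  by (induction i rule: dec_induct) auto

lemma exp_le_one_minus:
  fixes x q :: real
  assumes "0 \<le> x" "x \<le> q" "q < 1"
  shows "exp (- x - x\<^sup>2 / (1 - q)) \<le> 1 - x"
proof -
  have x: "x < 1" using assms by simp
  have "ln (1 / (1 - x)) \<le> 1 / (1 - x) - 1"
    using x by (intro ln_le_minus_one) auto
  also have "\<dots> = x + x\<^sup>2 / (1 - x)"
    using x by (simp add: field_simps power2_eq_square)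
  also have "x\<^sup>2 / (1 - x) \<le> x\<^sup>2 / (1 - q)"
    using assms by (intro divide_left_mono) auto
  finally have "- x - x\<^sup>2 / (1 - q) \<le> ln (1 - x)"
    using x by (simp add: ln_div)
  then show ?thesis
    using x by (metis exp_le_cancel_iff exp_ln diff_gt_0_iff_gt)
qed

lemma prod_one_minus_le_exp:
  fixes s :: "'b \<Rightarrow> real"
  assumes "\<And>m. m \<in> S \<Longrightarrow> s m \<le> 1"
  shows "(\<Prod>m\<in>S. 1 - s m) \<le> exp (- (\<Sum>m\<in>S. s m))"
proof (cases "finite S")
  case True
  have "(\<Prod>m\<in>S. 1 - s m) \<le> (\<Prod>m\<in>S. exp (- s m))"
    using assms exp_ge_add_one_self[of "- s _"] by (intro prod_mono) auto
  also have "\<dots> = exp (- (\<Sum>m\<in>S. s m))"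
    using True by (simp add: exp_sum sum_negf [symmetric] del: sum_negf)
  finally show ?thesis .
qed simp

lemma exp_le_prod_one_minus:
  fixes s :: "'b \<Rightarrow> real"
  assumes "\<And>m. m \<in> S \<Longrightarrow> 0 \<le> s m \<and> s m \<le> q" "q < 1"
  shows "exp (- (\<Sum>m\<in>S. s m) - (\<Sum>m\<in>S. (s m)\<^sup>2) / (1 - q)) \<le> (\<Prod>m\<in>S. 1 - s m)"
proof (cases "finite S")
  case True
  have "exp (- (\<Sum>m\<in>S. s m) - (\<Sum>m\<in>S. (s m)\<^sup>2) / (1 - q)) = (\<Prod>m\<in>S. exp (- s m - (s m)\<^sup>2 / (1 - q)))"
    using True by (simp add: sum_negf sum_subtractf sum_divide_distrib flip: exp_sum)
  also have "\<dots> \<le> (\<Prod>m\<in>S. 1 - s m)"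
    using assms exp_le_one_minus by (intro prod_mono) auto
  finally show ?thesis .
qed simp

lemma le_mult_const_mono:
  fixes x y c K :: real
  assumes "x \<le> c * y" "c \<le> K" "0 \<le> y"
  shows "x \<le> K * y"
  using assms mult_right_mono[of c K y] by linarith

lemma le_mult_inverse_const:
  fixes x y c K :: real
  assumes "c * x \<le> y" "0 < c" "1 / c \<le> K" "0 \<le> y"
  shows "x \<le> K * y"
proof (rule le_mult_const_mono[OF _ assms(3,4)])
  show "x \<le> 1 / c * y"
    using assms(1,2) by (simp add: field_simps mult.commute)
qed

lemma two_sided_bounds_trans:
  fixes a b w c k k' C :: real
  assumes ab: "a \<le> b" "b \<le> c * a" and aw: "a \<le> k * w" "w \<le> k' * a"
    and nonneg: "0 \<le> a" "0 \<le> w" "1 \<le> c" "0 \<le> k" "0 \<le> k'"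
    and C: "max c (max (c * k) k') \<le> C"
  shows "a \<le> C * b \<and> b \<le> C * a \<and> b \<le> C * w \<and> w \<le> C * b \<and> a \<le> C * w \<and> w \<le> C * a"
proof -
  have "k \<le> c * k"
    using mult_right_mono[OF nonneg(3,4)] by simp
  with C nonneg have C_ge: "1 \<le> C" "c \<le> C" "c * k \<le> C" "k' \<le> C" "k \<le> C"
    by auto
  have "c * a \<le> c * (k * w)"
    using aw(1) nonneg by (intro mult_left_mono) auto
  with ab(2) have "b \<le> c * k * w"
    by (simp add: mult.assoc)
  moreover have "k' * a \<le> k' * b"
    using ab(1) nonneg by (intro mult_left_mono)
  with aw(2) have "w \<le> k' * b"
    by simp
  ultimately show ?thesis
    using ab aw nonneg C_ge
    by (auto intro: le_mult_const_mono[of _ 1] le_mult_const_mono[of _ c]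
        le_mult_const_mono[of _ "c * k"] le_mult_const_mono[of _ k'] le_mult_const_mono[of _ k])
qed

lemma one_minus_sq_recursion_le:
  fixes s v K U U' u :: real
  assumes s: "0 \<le> s" "s \<le> 1" and v: "0 \<le> v" "v \<le> K * U"
    and U: "U - U' \<le> U / u" and su: "2 \<le> s * u" and sKU: "2 * s \<le> K * U"
    and pos: "0 < u" "0 \<le> U" "0 \<le> K"
  shows "(1 - s)\<^sup>2 * v + s\<^sup>2 \<le> K * U'"
proof -
  have "(1 - s)\<^sup>2 * v \<le> (1 - s) * v"
    using s v by (intro mult_right_mono) (auto simp: power2_eq_square mult_left_le)
  also have "\<dots> \<le> (1 - s) * (K * U)"
    using s v by (intro mult_left_mono) auto
  finally have "(1 - s)\<^sup>2 * v \<le> K * U - s * (K * U)"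
    by (simp add: algebra_simps)
  moreover have "K * U - K * U' \<le> s * (K * U) / 2"
  proof -
    have "K * (U - U') \<le> K * (U / u)"
      using U pos by (intro mult_left_mono) auto
    also have "\<dots> = (K * U) * (1 / u)"
      by simp
    also have "\<dots> \<le> (K * U) * (s / 2)"
      using su pos by (intro mult_left_mono) (auto simp: field_simps)
    finally show ?thesis
      by (simp add: algebra_simps)
  qed
  moreover have "s\<^sup>2 \<le> s * (K * U) / 2"
    using mult_left_mono[OF sKU s(1)] by (simp add: power2_eq_square)
  ultimately show ?thesis
    by linarith
qed

section \<open>Step-size products and weighted sums\<close>

lemma Yprod_eq_prod: "Yprod \<eta> \<alpha> k i = (\<Prod>m\<in>{k+1..i}. 1 - stepsize \<eta> \<alpha> m)"
  unfolding Yprod_def by auto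

lemma Yprod_self [simp]: "Yprod \<eta> \<alpha> i i = 1"
  unfolding Yprod_def by simp

lemma Yprod_Suc: "k \<le> i \<Longrightarrow> Yprod \<eta> \<alpha> k (Suc i) = (1 - stepsize \<eta> \<alpha> (Suc i)) * Yprod \<eta> \<alpha> k i"
  unfolding Yprod_eq_prod by (simp add: mult.commute)

lemma Yprod_trans:
  assumes "k \<le> j" "j \<le> i"
  shows "Yprod \<eta> \<alpha> k i = Yprod \<eta> \<alpha> k j * Yprod \<eta> \<alpha> j i"
  using assms(2) by (induction i rule: dec_induct) (use assms(1) in \<open>simp_all add: Yprod_Suc\<close>)

lemma stepsize_1 [simp]: "stepsize \<eta> \<alpha> (Suc 0) = \<eta>"
  unfolding stepsize_def by simp

definition weight_sq_sum :: "real \<Rightarrow> real \<Rightarrow> nat \<Rightarrow> real" where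
  "weight_sq_sum \<eta> \<alpha> i = (\<Sum>k\<in>{1..i}. (Yprod \<eta> \<alpha> k i * stepsize \<eta> \<alpha> k)\<^sup>2)"

lemma weight_sq_sum_nonneg: "0 \<le> weight_sq_sum \<eta> \<alpha> i"
  unfolding weight_sq_sum_def by (simp add: sum_nonneg)

lemma weight_sq_sum_1 [simp]: "weight_sq_sum \<eta> \<alpha> (Suc 0) = \<eta>\<^sup>2"
  unfolding weight_sq_sum_def by simp

lemma weight_sq_sum_Suc:
  "weight_sq_sum \<eta> \<alpha> (Suc i)
     = (1 - stepsize \<eta> \<alpha> (Suc i))\<^sup>2 * weight_sq_sum \<eta> \<alpha> i + (stepsize \<eta> \<alpha> (Suc i))\<^sup>2"
proof -
  have "(\<Sum>k\<in>{1..i}. (Yprod \<eta> \<alpha> k (Suc i) * stepsize \<eta> \<alpha> k)\<^sup>2)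
      = (\<Sum>k\<in>{1..i}. (1 - stepsize \<eta> \<alpha> (Suc i))\<^sup>2 * (Yprod \<eta> \<alpha> k i * stepsize \<eta> \<alpha> k)\<^sup>2)"
    by (intro sum.cong) (auto simp: Yprod_Suc power_mult_distrib)
  then show ?thesis
    unfolding weight_sq_sum_def by (simp add: sum_distrib_left)
qed

lemma Yprod_0_sq_le_weight_sq_sum:
  assumes "1 \<le> i" "\<eta> \<noteq> 0"
  shows "(Yprod \<eta> \<alpha> 0 i * x0)\<^sup>2 \<le> ((1 - \<eta>) * x0 / \<eta>)\<^sup>2 * weight_sq_sum \<eta> \<alpha> i"
proof -
  have Y: "Yprod \<eta> \<alpha> 0 i = (1 - \<eta>) * Yprod \<eta> \<alpha> 1 i"
    using Yprod_trans[of 0 1 i] Yprod_Suc[of 0 0 \<eta> \<alpha>] assms by simp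
  have "(Yprod \<eta> \<alpha> 0 i * x0)\<^sup>2 = ((1 - \<eta>) * x0 / \<eta>)\<^sup>2 * (Yprod \<eta> \<alpha> 1 i * stepsize \<eta> \<alpha> 1)\<^sup>2"
    unfolding Y using assms(2) by (simp add: power_mult_distrib power_divide)
  also have "\<dots> \<le> ((1 - \<eta>) * x0 / \<eta>)\<^sup>2 * weight_sq_sum \<eta> \<alpha> i"
    unfolding weight_sq_sum_def using assms
    by (intro mult_left_mono member_le_sum[where f = "\<lambda>k. (Yprod \<eta> \<alpha> k i * stepsize \<eta> \<alpha> k)\<^sup>2"]) auto
  finally show ?thesis .
qed

definition discounted_weight_sq_sum :: "real \<Rightarrow> real \<Rightarrow> nat \<Rightarrow> real" where
  "discounted_weight_sq_sum \<eta> \<alpha> j = (\<Sum>k\<in>{1..j}. Yprod \<eta> \<alpha> k j * weight_sq_sum \<eta> \<alpha> k)"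

lemma discounted_weight_sq_sum_1 [simp]: "discounted_weight_sq_sum \<eta> \<alpha> (Suc 0) = \<eta>\<^sup>2"
  unfolding discounted_weight_sq_sum_def by simp

lemma discounted_weight_sq_sum_Suc:
  "discounted_weight_sq_sum \<eta> \<alpha> (Suc j)
     = (1 - stepsize \<eta> \<alpha> (Suc j)) * discounted_weight_sq_sum \<eta> \<alpha> j + weight_sq_sum \<eta> \<alpha> (Suc j)"
proof -
  have "(\<Sum>k\<in>{1..j}. Yprod \<eta> \<alpha> k (Suc j) * weight_sq_sum \<eta> \<alpha> k)
      = (\<Sum>k\<in>{1..j}. (1 - stepsize \<eta> \<alpha> (Suc j)) * (Yprod \<eta> \<alpha> k j * weight_sq_sum \<eta> \<alpha> k))"
    by (intro sum.cong) (auto simp: Yprod_Suc)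
  then show ?thesis
    unfolding discounted_weight_sq_sum_def by (simp add: sum_distrib_left)
qed

lemma sum_Yprod_tail_Suc:
  "(\<Sum>n<Suc N. Yprod \<eta> \<alpha> i (i + n))
     = 1 + (1 - stepsize \<eta> \<alpha> (Suc i)) * (\<Sum>n<N. Yprod \<eta> \<alpha> (Suc i) (Suc i + n))"
proof -
  have "Yprod \<eta> \<alpha> i (i + Suc n) = (1 - stepsize \<eta> \<alpha> (Suc i)) * Yprod \<eta> \<alpha> (Suc i) (Suc i + n)" for n
    using Yprod_trans[of i "Suc i" "i + Suc n" \<eta> \<alpha>] Yprod_Suc[of i i \<eta> \<alpha>] by simp
  then show ?thesis
    by (simp add: sum.lessThan_Suc_shift sum_distrib_left del: sum.lessThan_Suc)
qed

section \<open>Polynomially decaying step sizes\<close>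

text \<open>
  The bound \<open>\<eta> < 2\<^sup>\<alpha>\<close> makes \<open>\<eta>\<^sub>m < 1\<close> for \<open>m \<ge> 2\<close>, so that every \<open>Y\<^sub>k\<^sup>i\<close> with \<open>k \<ge> 1\<close> is a
  product of nonnegative factors. The first step size \<open>\<eta>\<^sub>1 = \<eta>\<close> may exceed \<open>1\<close>, so
  \<open>Y\<^sub>0\<^sup>i\<close> can be negative; it only enters through the mean \<open>Y\<^sub>0\<^sup>i x\<^sub>0\<close>.
\<close>

locale polynomial_stepsizes =
  fixes \<eta> \<alpha> :: real
  assumes eta_pos: "0 < \<eta>" and eta_less: "\<eta> < 2 powr \<alpha>"
    and alpha_gt: "1/2 < \<alpha>" and alpha_less: "\<alpha> < 1"
begin

lemma stepsize_pos: "1 \<le> m \<Longrightarrow> 0 < stepsize \<eta> \<alpha> m"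
  unfolding stepsize_def using eta_pos by simp

lemma stepsize_le_eta: "1 \<le> m \<Longrightarrow> stepsize \<eta> \<alpha> m \<le> \<eta>"
proof -
  assume "1 \<le> m"
  then have "real m powr (- \<alpha>) \<le> 1 powr (- \<alpha>)"
    using alpha_gt by (intro powr_mono2') auto
  then show ?thesis
    unfolding stepsize_def using eta_pos by simp
qed

lemma stepsize_bound_less_1: "\<eta> * 2 powr (- \<alpha>) < 1"
proof -
  have "\<eta> * 2 powr (- \<alpha>) < 2 powr \<alpha> * 2 powr (- \<alpha>)"
    using eta_less by (intro mult_strict_right_mono) auto
  then show ?thesis by (simp flip: powr_add)
qed

lemma stepsize_le_bound: "2 \<le> m \<Longrightarrow> stepsize \<eta> \<alpha> m \<le> \<eta> * 2 powr (- \<alpha>)"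
proof -
  assume "2 \<le> m"
  then have "real m powr (- \<alpha>) \<le> 2 powr (- \<alpha>)"
    using alpha_gt by (intro powr_mono2') auto
  then show ?thesis
    unfolding stepsize_def using eta_pos by simp
qed

lemma stepsize_le_1: "2 \<le> m \<Longrightarrow> stepsize \<eta> \<alpha> m \<le> 1"
  using stepsize_le_bound stepsize_bound_less_1 by fastforce

lemma Yprod_nonneg: "1 \<le> k \<Longrightarrow> 0 \<le> Yprod \<eta> \<alpha> k i"
  unfolding Yprod_eq_prod using stepsize_le_1 by (intro prod_nonneg) auto

definition cum_step :: "real \<Rightarrow> real" where
  "cum_step x = \<eta> / (1 - \<alpha>) * x powr (1 - \<alpha>)"

lemma cum_step_diff_bounds:
  assumes "0 < x"
  shows "\<eta> * (x + 1) powr (- \<alpha>) \<le> cum_step (x + 1) - cum_step x"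
    and "cum_step (x + 1) - cum_step x \<le> \<eta> * x powr (- \<alpha>)"
proof -
  have diff: "cum_step (x + 1) - cum_step x = \<eta> / (1 - \<alpha>) * ((x + 1) powr (1 - \<alpha>) - x powr (1 - \<alpha>))"
    unfolding cum_step_def by (simp add: right_diff_distrib)
  have "0 \<le> \<eta> / (1 - \<alpha>)"
    using eta_pos alpha_less by simp
  moreover have "(1 - \<alpha>) * (x + 1) powr (- \<alpha>) \<le> (x + 1) powr (1 - \<alpha>) - x powr (1 - \<alpha>)"
    and "(x + 1) powr (1 - \<alpha>) - x powr (1 - \<alpha>) \<le> (1 - \<alpha>) * x powr (- \<alpha>)"
    using powr_diff_bounds_nonneg[of x "x + 1" "1 - \<alpha>"] assms alpha_gt alpha_less by simp_all
  ultimately show "\<eta> * (x + 1) powr (- \<alpha>) \<le> cum_step (x + 1) - cum_step x"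
    and "cum_step (x + 1) - cum_step x \<le> \<eta> * x powr (- \<alpha>)"
    unfolding diff using alpha_less by (auto dest: mult_left_mono)
qed

lemma sum_stepsize_le:
  assumes "1 \<le> j" "j \<le> i"
  shows "(\<Sum>m\<in>{j+1..i}. stepsize \<eta> \<alpha> m) \<le> cum_step i - cum_step j"
proof -
  have "(\<Sum>m\<in>{j+1..i}. stepsize \<eta> \<alpha> m) \<le> (\<Sum>m\<in>{j+1..i}. cum_step m - cum_step (m - 1))"
  proof (intro sum_mono)
    fix m assume "m \<in> {j+1..i}"
    with assms have "0 < real (m - 1)" "real (m - 1) + 1 = real m" by auto
    with cum_step_diff_bounds(1)[of "real (m - 1)"]
    show "stepsize \<eta> \<alpha> m \<le> cum_step m - cum_step (m - 1)"
      unfolding stepsize_def by simp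
  qed
  also have "\<dots> = cum_step i - cum_step j"
    using sum_diff_telescope[OF assms(2), of "\<lambda>m. cum_step (real m)"] by simp
  finally show ?thesis .
qed

lemma sum_stepsize_ge:
  assumes "1 \<le> j" "j \<le> i"
  shows "cum_step i - cum_step j - \<eta> \<le> (\<Sum>m\<in>{j+1..i}. stepsize \<eta> \<alpha> m)"
proof -
  have "cum_step (real i + 1) - cum_step (real j + 1)
      = (\<Sum>m\<in>{j+1..i}. cum_step (real m + 1) - cum_step m)"
    using sum_diff_telescope[OF assms(2), of "\<lambda>m. cum_step (real m + 1)"] by (simp add: add.commute)
  also have "\<dots> \<le> (\<Sum>m\<in>{j+1..i}. stepsize \<eta> \<alpha> m)"
  proof (intro sum_mono)
    fix m assume "m \<in> {j+1..i}"
    then show "cum_step (real m + 1) - cum_step m \<le> stepsize \<eta> \<alpha> m"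
      using cum_step_diff_bounds(2)[of "real m"] unfolding stepsize_def by simp
  qed
  finally have "cum_step (real i + 1) - cum_step (real j + 1) \<le> (\<Sum>m\<in>{j+1..i}. stepsize \<eta> \<alpha> m)" .
  moreover have "cum_step i \<le> cum_step (real i + 1)"
  proof -
    have "0 \<le> \<eta> * (real i + 1) powr (- \<alpha>)"
      using eta_pos by simp
    with cum_step_diff_bounds(1)[of i] assms show ?thesis by simp
  qed
  moreover have "cum_step (real j + 1) - cum_step j \<le> \<eta>"
    using cum_step_diff_bounds(2)[of j] stepsize_le_eta[of j] assms unfolding stepsize_def by simp
  ultimately show ?thesis by simp
qed

lemma sum_stepsize_sq_le:
  assumes "1 \<le> j"
  shows "(\<Sum>m\<in>{j+1..i}. (stepsize \<eta> \<alpha> m)\<^sup>2) \<le> \<eta>\<^sup>2 / (2 * \<alpha> - 1)"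
proof (cases "j \<le> i")
  case True
  define c where "c = \<eta>\<^sup>2 / (2 * \<alpha> - 1)"
  define G where "G m = - (real m powr (1 - 2 * \<alpha>))" for m
  have c: "0 \<le> c"
    unfolding c_def using alpha_gt by simp
  have "(\<Sum>m\<in>{j+1..i}. (stepsize \<eta> \<alpha> m)\<^sup>2) \<le> (\<Sum>m\<in>{j+1..i}. c * (G m - G (m - 1)))"
  proof (intro sum_mono)
    fix m assume "m \<in> {j+1..i}"
    with assms have m: "0 < real (m - 1)" "real m - real (m - 1) = 1" by auto
    have "\<eta>\<^sup>2 * real m powr (- 2 * \<alpha>) = c * ((2 * \<alpha> - 1) * real m powr (- 2 * \<alpha>))"
      unfolding c_def using alpha_gt by simp
    also have "\<dots> \<le> c * (G m - G (m - 1))"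
      using powr_diff_bounds_nonpos(1)[of "real (m - 1)" m "1 - 2 * \<alpha>"] m alpha_gt c
      unfolding G_def by (intro mult_left_mono) simp_all
    moreover have "(stepsize \<eta> \<alpha> m)\<^sup>2 = \<eta>\<^sup>2 * real m powr (- 2 * \<alpha>)"
      unfolding stepsize_def by (simp add: power_mult_distrib power2_eq_square flip: powr_add)
    ultimately show "(stepsize \<eta> \<alpha> m)\<^sup>2 \<le> c * (G m - G (m - 1))"
      by argo
  qed
  also have "\<dots> = c * (G i - G j)"
    using sum_diff_telescope[OF True, of G] by (simp flip: sum_distrib_left)
  also have "\<dots> \<le> c"
  proof -
    have "real j powr (1 - 2 * \<alpha>) \<le> 1 powr (1 - 2 * \<alpha>)"
      using assms alpha_gt by (intro powr_mono2') auto
    then have "G i - G j \<le> 1"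
      unfolding G_def using powr_ge_zero[of "real i" "1 - 2 * \<alpha>"] by (simp del: powr_ge_zero)
    then show ?thesis
      using c mult_left_mono[of "G i - G j" 1 c] by simp
  qed
  finally show ?thesis
    unfolding c_def .
qed (use alpha_gt in simp)

lemma Yprod_le_exp:
  assumes "1 \<le> j" "j \<le> i"
  shows "Yprod \<eta> \<alpha> j i \<le> exp \<eta> * exp (cum_step j - cum_step i)"
proof -
  have "Yprod \<eta> \<alpha> j i \<le> exp (- (\<Sum>m\<in>{j+1..i}. stepsize \<eta> \<alpha> m))"
    unfolding Yprod_eq_prod using assms stepsize_le_1 by (intro prod_one_minus_le_exp) auto
  also have "\<dots> \<le> exp (\<eta> + (cum_step j - cum_step i))"
    using sum_stepsize_ge[OF assms] by simp
  finally show ?thesis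
    by (simp add: exp_add)
qed

lemma Yprod_ge_exp:
  assumes "1 \<le> j" "j \<le> i"
  shows "exp (- \<eta>\<^sup>2 / ((2 * \<alpha> - 1) * (1 - \<eta> * 2 powr (- \<alpha>)))) * exp (cum_step j - cum_step i)
           \<le> Yprod \<eta> \<alpha> j i"
proof -
  let ?q = "\<eta> * 2 powr (- \<alpha>)"
  have q: "0 < 1 - ?q"
    using stepsize_bound_less_1 by simp
  have "(\<Sum>m\<in>{j+1..i}. (stepsize \<eta> \<alpha> m)\<^sup>2) / (1 - ?q) \<le> \<eta>\<^sup>2 / (2 * \<alpha> - 1) / (1 - ?q)"
    using sum_stepsize_sq_le[OF assms(1)] q by (intro divide_right_mono) auto
  then have "- \<eta>\<^sup>2 / ((2 * \<alpha> - 1) * (1 - ?q)) + (cum_step j - cum_step i)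
      \<le> - (\<Sum>m\<in>{j+1..i}. stepsize \<eta> \<alpha> m) - (\<Sum>m\<in>{j+1..i}. (stepsize \<eta> \<alpha> m)\<^sup>2) / (1 - ?q)"
    using sum_stepsize_le[OF assms] by (simp add: field_simps)
  then have "exp (- \<eta>\<^sup>2 / ((2 * \<alpha> - 1) * (1 - ?q))) * exp (cum_step j - cum_step i)
      \<le> exp (- (\<Sum>m\<in>{j+1..i}. stepsize \<eta> \<alpha> m) - (\<Sum>m\<in>{j+1..i}. (stepsize \<eta> \<alpha> m)\<^sup>2) / (1 - ?q))"
    by (simp flip: exp_add)
  also have "\<dots> \<le> Yprod \<eta> \<alpha> j i"
    unfolding Yprod_eq_prod using assms stepsize_pos stepsize_le_bound stepsize_bound_less_1
    by (intro exp_le_prod_one_minus) (auto intro: less_imp_le)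
  finally show ?thesis .
qed

lemma weight_sq_sum_ge:
  assumes "1 \<le> i"
  shows "min (\<eta> / 2) (\<eta>\<^sup>2) * real i powr (- \<alpha>) \<le> weight_sq_sum \<eta> \<alpha> i"
  using assms
proof (induction i rule: dec_induct)
  case base
  then show ?case by simp
next
  case (step i)
  define c where "c = min (\<eta> / 2) (\<eta>\<^sup>2)"
  define w where "w = real (Suc i) powr (- \<alpha>)"
  define s where "s = stepsize \<eta> \<alpha> (Suc i)"
  have s: "s = \<eta> * w" and w: "0 \<le> w" and c: "0 < c" "c \<le> \<eta> / 2"
    unfolding s_def w_def c_def stepsize_def using eta_pos by auto
  have "w \<le> real i powr (- \<alpha>)"
    unfolding w_def using step alpha_gt by (intro powr_mono2') auto
  then have "c * w \<le> weight_sq_sum \<eta> \<alpha> i"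
    using step.IH c unfolding c_def by (meson mult_left_mono order_trans less_imp_le)
  then have "(1 - s)\<^sup>2 * (c * w) \<le> (1 - s)\<^sup>2 * weight_sq_sum \<eta> \<alpha> i"
    by (intro mult_left_mono) auto
  moreover have "(1 - s)\<^sup>2 * (c * w) + s\<^sup>2 - c * w = w * s * (c * s + (\<eta> - 2 * c))"
    unfolding s by (simp add: algebra_simps power2_eq_square)
  moreover have "0 \<le> w * s * (c * s + (\<eta> - 2 * c))"
    using w c eta_pos unfolding s by (intro mult_nonneg_nonneg) auto
  ultimately show ?case
    unfolding weight_sq_sum_Suc s_def[symmetric] w_def[symmetric] c_def[symmetric] by linarith
qed

lemma stepsize_Suc_le_shifted:
  assumes "1 \<le> b"
  shows "stepsize \<eta> \<alpha> (Suc i) \<le> \<eta> * (1 + b) * (real i + b) powr (- \<alpha>)"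
proof -
  have "1 / (1 + b) * real (Suc i) powr (- \<alpha>) \<le> (1 + b) powr (- \<alpha>) * real (Suc i) powr (- \<alpha>)"
    using inverse_le_powr_neg[of "1 + b" \<alpha>] assms alpha_less by (intro mult_right_mono) auto
  also have "\<dots> = ((1 + b) * real (Suc i)) powr (- \<alpha>)"
    using assms by (simp add: powr_mult)
  also have "\<dots> \<le> (real i + b) powr (- \<alpha>)"
    using assms alpha_gt by (intro powr_mono2') (auto simp: algebra_simps)
  finally have "real (Suc i) powr (- \<alpha>) \<le> (1 + b) * (real i + b) powr (- \<alpha>)"
    using assms by (simp add: field_simps)
  then have "\<eta> * real (Suc i) powr (- \<alpha>) \<le> \<eta> * ((1 + b) * (real i + b) powr (- \<alpha>))"
    using eta_pos by (intro mult_left_mono) auto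
  then show ?thesis
    unfolding stepsize_def by (simp add: mult.assoc)
qed

lemma weight_sq_sum_le_shifted:
  assumes b: "1 \<le> b" and shift: "\<And>i. 2 \<le> stepsize \<eta> \<alpha> (Suc i) * (real i + b)" and "1 \<le> i"
  shows "weight_sq_sum \<eta> \<alpha> i \<le> (2 * \<eta> + \<eta>\<^sup>2) * (1 + b) * (real i + b) powr (- \<alpha>)"
  using \<open>1 \<le> i\<close>
proof (induction i rule: dec_induct)
  case base
  have "\<eta>\<^sup>2 \<le> (2 * \<eta> + \<eta>\<^sup>2) * (1 + b) * (1 / (1 + b))"
    using b eta_pos by simp
  also have "\<dots> \<le> (2 * \<eta> + \<eta>\<^sup>2) * (1 + b) * (1 + b) powr (- \<alpha>)"
    using inverse_le_powr_neg[of "1 + b" \<alpha>] b eta_pos alpha_less by (intro mult_left_mono) auto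
  finally show ?case
    by (simp add: add.commute)
next
  case (step i)
  define K where "K = (2 * \<eta> + \<eta>\<^sup>2) * (1 + b)"
  define s where "s = stepsize \<eta> \<alpha> (Suc i)"
  define u where "u = real i + b"
  have u: "1 \<le> u" and K: "0 \<le> K"
    unfolding u_def K_def using b eta_pos by simp_all
  have s: "0 \<le> s" "s \<le> 1"
    unfolding s_def using stepsize_pos[of "Suc i"] stepsize_le_1[of "Suc i"] step by auto
  have "2 * s \<le> 2 * \<eta> * (1 + b) * u powr (- \<alpha>)"
    unfolding s_def u_def using stepsize_Suc_le_shifted[OF b, of i] by simp
  also have "\<dots> \<le> K * u powr (- \<alpha>)"
    unfolding K_def using b eta_pos by (intro mult_right_mono) (auto simp: algebra_simps)
  finally have sKU: "2 * s \<le> K * u powr (- \<alpha>)" .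
  have "weight_sq_sum \<eta> \<alpha> (Suc i) = (1 - s)\<^sup>2 * weight_sq_sum \<eta> \<alpha> i + s\<^sup>2"
    unfolding s_def weight_sq_sum_Suc ..
  also have "\<dots> \<le> K * (u + 1) powr (- \<alpha>)"
  proof (rule one_minus_sq_recursion_le[OF s weight_sq_sum_nonneg _ _ _ sKU])
    show "weight_sq_sum \<eta> \<alpha> i \<le> K * u powr (- \<alpha>)"
      using step.IH unfolding K_def u_def .
    show "u powr (- \<alpha>) - (u + 1) powr (- \<alpha>) \<le> u powr (- \<alpha>) / u"
      using u alpha_gt alpha_less by (intro powr_neg_diff_le) auto
    show "2 \<le> s * u"
      unfolding s_def u_def by (rule shift)
  qed (use u K in auto)
  finally show ?case
    unfolding u_def K_def by (simp add: add_ac)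
qed

lemma weight_sq_sum_le: "\<exists>K. \<forall>i\<ge>1. weight_sq_sum \<eta> \<alpha> i \<le> K * real i powr (- \<alpha>)"
proof -
  define b where "b = 1 + 2 / \<eta> * (2 / \<eta>) powr (\<alpha> / (1 - \<alpha>))"
  have b: "1 \<le> b"
    unfolding b_def using eta_pos by simp
  have shift: "2 \<le> stepsize \<eta> \<alpha> (Suc i) * (real i + b)" for i
  proof -
    have "real (Suc i) powr \<alpha> \<le> \<eta> / 2 * real (Suc i) + (1 / (\<eta> / 2)) powr (\<alpha> / (1 - \<alpha>))"
      using eta_pos alpha_gt alpha_less by (intro powr_le_linear) auto
    also have "\<dots> = \<eta> / 2 * (real i + b)"
      unfolding b_def using eta_pos by (simp add: field_simps)
    finally have "2 * (real (Suc i) powr (- \<alpha>) * real (Suc i) powr \<alpha>)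
        \<le> \<eta> * real (Suc i) powr (- \<alpha>) * (real i + b)"
      by (simp add: mult_left_mono)
    then show ?thesis
      unfolding stepsize_def by (simp flip: powr_add)
  qed
  have "weight_sq_sum \<eta> \<alpha> i \<le> (2 * \<eta> + \<eta>\<^sup>2) * (1 + b) * real i powr (- \<alpha>)" if "1 \<le> i" for i
  proof -
    have "(real i + b) powr (- \<alpha>) \<le> real i powr (- \<alpha>)"
      using that b alpha_gt by (intro powr_mono2') auto
    moreover have "0 \<le> (2 * \<eta> + \<eta>\<^sup>2) * (1 + b)"
      using eta_pos b by simp
    ultimately show ?thesis
      using weight_sq_sum_le_shifted[OF b shift that] by (meson mult_left_mono order_trans)
  qed
  then show ?thesis by blast
qed

lemma discounted_weight_sq_sum_between:
  assumes c: "c \<le> \<eta>\<^sup>2" "\<eta> * c \<le> cV" and K: "\<eta>\<^sup>2 \<le> K" "KV \<le> \<eta> * K"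
    and V: "\<And>i. 1 \<le> i \<Longrightarrow> cV * real i powr (- \<alpha>) \<le> weight_sq_sum \<eta> \<alpha> i"
      "\<And>i. 1 \<le> i \<Longrightarrow> weight_sq_sum \<eta> \<alpha> i \<le> KV * real i powr (- \<alpha>)"
    and "1 \<le> j"
  shows "c \<le> discounted_weight_sq_sum \<eta> \<alpha> j \<and> discounted_weight_sq_sum \<eta> \<alpha> j \<le> K"
  using \<open>1 \<le> j\<close>
proof (induction j rule: dec_induct)
  case base
  then show ?case
    using c K by simp
next
  case (step j)
  define w where "w = real (Suc j) powr (- \<alpha>)"
  define s where "s = stepsize \<eta> \<alpha> (Suc j)"
  have s: "s = \<eta> * w" "0 \<le> s" "s \<le> 1"
    unfolding s_def w_def using stepsize_le_1[of "Suc j"] step eta_pos by (auto simp: stepsize_def)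
  have w: "0 \<le> w"
    unfolding w_def by simp
  have "(1 - s) * c \<le> (1 - s) * discounted_weight_sq_sum \<eta> \<alpha> j"
    "(1 - s) * discounted_weight_sq_sum \<eta> \<alpha> j \<le> (1 - s) * K"
    using step.IH s by (auto intro: mult_left_mono)
  moreover have "s * c \<le> cV * w" "KV * w \<le> s * K"
    using mult_right_mono[OF c(2) w] mult_right_mono[OF K(2) w] unfolding s by (simp_all add: mult_ac)
  moreover have "cV * w \<le> weight_sq_sum \<eta> \<alpha> (Suc j)" "weight_sq_sum \<eta> \<alpha> (Suc j) \<le> KV * w"
    unfolding w_def using V[of "Suc j"] by auto
  ultimately show ?case
    unfolding discounted_weight_sq_sum_Suc s_def[symmetric] by (simp add: algebra_simps)
qed

lemma discounted_weight_sq_sum_bounds: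
  "\<exists>c>0. \<exists>K. \<forall>j\<ge>1. c \<le> discounted_weight_sq_sum \<eta> \<alpha> j \<and> discounted_weight_sq_sum \<eta> \<alpha> j \<le> K"
proof -
  define cV where "cV = min (\<eta> / 2) (\<eta>\<^sup>2)"
  obtain KV where KV: "\<And>i. 1 \<le> i \<Longrightarrow> weight_sq_sum \<eta> \<alpha> i \<le> KV * real i powr (- \<alpha>)"
    using weight_sq_sum_le by blast
  define c where "c = min (\<eta>\<^sup>2) (cV / \<eta>)"
  define K where "K = max (\<eta>\<^sup>2) (KV / \<eta>)"
  have c: "0 < c" "c \<le> \<eta>\<^sup>2" "\<eta> * c \<le> cV"
    unfolding c_def cV_def using eta_pos by (auto simp: min_def field_simps)
  have K: "\<eta>\<^sup>2 \<le> K" "KV / \<eta> \<le> K"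
    unfolding K_def by simp_all
  then have "KV \<le> \<eta> * K"
    using eta_pos by (simp add: pos_divide_le_eq mult.commute)
  have "c \<le> discounted_weight_sq_sum \<eta> \<alpha> j \<and> discounted_weight_sq_sum \<eta> \<alpha> j \<le> K" if "1 \<le> j" for j
    using c(2,3) K(1) \<open>KV \<le> \<eta> * K\<close> weight_sq_sum_ge[folded cV_def] KV that
    by (rule discounted_weight_sq_sum_between)
  with c(1) show ?thesis by blast
qed

lemma sum_Yprod_tail_le_shifted:
  assumes a: "0 < a" "a powr (\<alpha> - 1) \<le> \<eta> / 2" and "1 \<le> i"
  shows "(\<Sum>n<N. Yprod \<eta> \<alpha> i (i + n)) \<le> 2 / \<eta> * (real i + a) powr \<alpha>"
  using \<open>1 \<le> i\<close>
proof (induction N arbitrary: i)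
  case 0
  then show ?case using eta_pos by simp
next
  case (Suc N)
  define s where "s = stepsize \<eta> \<alpha> (Suc i)"
  define x where "x = real i + a"
  have x: "0 < x"
    unfolding x_def using a by simp
  have s: "0 \<le> s" "s \<le> 1"
    unfolding s_def using stepsize_pos[of "Suc i"] stepsize_le_1[of "Suc i"] Suc.prems by auto
  have "\<eta> \<le> s * (x + 1) powr \<alpha>"
  proof -
    have "real (Suc i) powr (- \<alpha>) * real (Suc i) powr \<alpha> \<le> real (Suc i) powr (- \<alpha>) * (x + 1) powr \<alpha>"
      unfolding x_def using a alpha_gt by (intro mult_left_mono powr_mono2) auto
    then have "1 \<le> real (Suc i) powr (- \<alpha>) * (x + 1) powr \<alpha>"
      by (simp flip: powr_add)
    then show ?thesis
      unfolding s_def stepsize_def using eta_pos mult_left_mono[of 1 _ \<eta>] by (simp add: mult.assoc)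
  qed
  moreover have "(x + 1) powr \<alpha> - x powr \<alpha> \<le> \<eta> / 2"
  proof -
    have "(x + 1) powr \<alpha> - x powr \<alpha> \<le> \<alpha> * x powr (\<alpha> - 1)"
      using powr_diff_bounds_nonneg(2)[of x "x + 1" \<alpha>] x alpha_gt alpha_less by simp
    also have "\<dots> \<le> x powr (\<alpha> - 1)"
      using alpha_gt alpha_less by (simp add: mult_left_le_one_le)
    also have "\<dots> \<le> a powr (\<alpha> - 1)"
      unfolding x_def using a alpha_less by (intro powr_mono2') auto
    finally show ?thesis
      using a by simp
  qed
  moreover have "(\<Sum>n<N. Yprod \<eta> \<alpha> (Suc i) (Suc i + n)) \<le> 2 / \<eta> * (x + 1) powr \<alpha>"
    using Suc.IH[of "Suc i"] unfolding x_def by (simp add: add_ac)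
  then have "(1 - s) * (\<Sum>n<N. Yprod \<eta> \<alpha> (Suc i) (Suc i + n)) \<le> (1 - s) * (2 / \<eta> * (x + 1) powr \<alpha>)"
    using s by (intro mult_left_mono) auto
  ultimately have "1 + (1 - s) * (\<Sum>n<N. Yprod \<eta> \<alpha> (Suc i) (Suc i + n)) \<le> 2 / \<eta> * x powr \<alpha>"
    using eta_pos by (simp add: field_simps)
  then show ?case
    unfolding sum_Yprod_tail_Suc s_def x_def .
qed

lemma sum_Yprod_tail_le: "\<exists>K. \<forall>N i. 1 \<le> i \<longrightarrow> (\<Sum>n<N. Yprod \<eta> \<alpha> i (i + n)) \<le> K * real i powr \<alpha>"
proof -
  define a where "a = (\<eta> / 2) powr (1 / (\<alpha> - 1))"
  have a: "0 < a" "a powr (\<alpha> - 1) = \<eta> / 2"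
    unfolding a_def using eta_pos alpha_less by (simp_all add: powr_powr)
  have "(\<Sum>n<N. Yprod \<eta> \<alpha> i (i + n)) \<le> 2 / \<eta> * (1 + a) powr \<alpha> * real i powr \<alpha>" if "1 \<le> i" for N i
  proof -
    have "(real i + a) powr \<alpha> \<le> ((1 + a) * real i) powr \<alpha>"
      using that a alpha_gt by (intro powr_mono2) (auto simp: algebra_simps)
    also have "\<dots> = (1 + a) powr \<alpha> * real i powr \<alpha>"
      using a by (simp add: powr_mult)
    finally have "2 / \<eta> * (real i + a) powr \<alpha> \<le> 2 / \<eta> * ((1 + a) powr \<alpha> * real i powr \<alpha>)"
      using eta_pos by (intro mult_left_mono) auto
    with sum_Yprod_tail_le_shifted[OF a(1) eq_refl[OF a(2)] that, of N] show ?thesis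
      by (simp only: mult.assoc)
  qed
  then show ?thesis by blast
qed

lemma exp_cum_step_diff_le:
  assumes "0 < j" "j \<le> i"
  shows "exp (cum_step j - cum_step i) \<le> exp (- \<eta> * real i powr (- \<alpha>) * (real i - real j))"
proof -
  have "\<eta> * real i powr (- \<alpha>) * (real i - real j)
      = \<eta> / (1 - \<alpha>) * ((real i - real j) * ((1 - \<alpha>) * real i powr (- \<alpha>)))"
    using alpha_less by simp
  also have "\<dots> \<le> \<eta> / (1 - \<alpha>) * (real i powr (1 - \<alpha>) - real j powr (1 - \<alpha>))"
    using powr_diff_bounds_nonneg(1)[of j i "1 - \<alpha>"] assms eta_pos alpha_gt alpha_less
    by (intro mult_left_mono) auto
  also have "\<dots> = cum_step i - cum_step j"
    unfolding cum_step_def by (simp add: right_diff_distrib)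
  finally show ?thesis
    by simp
qed

lemma stepsize_weight_bounds:
  obtains K where "1 \<le> K"
    and "\<And>i. 1 \<le> i \<Longrightarrow> real i powr (- \<alpha>) \<le> K * weight_sq_sum \<eta> \<alpha> i"
    and "\<And>i. 1 \<le> i \<Longrightarrow> weight_sq_sum \<eta> \<alpha> i \<le> K * real i powr (- \<alpha>)"
    and "\<And>i j. 1 \<le> j \<Longrightarrow> j \<le> i \<Longrightarrow> exp (cum_step j - cum_step i) \<le> K * Yprod \<eta> \<alpha> j i"
    and "\<And>i j. 1 \<le> j \<Longrightarrow> j \<le> i \<Longrightarrow> Yprod \<eta> \<alpha> j i \<le> K * exp (cum_step j - cum_step i)"
    and "\<And>j. 1 \<le> j \<Longrightarrow> 1 \<le> K * discounted_weight_sq_sum \<eta> \<alpha> j"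
    and "\<And>j. 1 \<le> j \<Longrightarrow> discounted_weight_sq_sum \<eta> \<alpha> j \<le> K"
    and "\<And>N i. 1 \<le> i \<Longrightarrow> (\<Sum>n<N. Yprod \<eta> \<alpha> i (i + n)) \<le> K * real i powr \<alpha>"
proof -
  define cV where "cV = min (\<eta> / 2) (\<eta>\<^sup>2)"
  define cY where "cY = exp (- \<eta>\<^sup>2 / ((2 * \<alpha> - 1) * (1 - \<eta> * 2 powr (- \<alpha>))))"
  obtain KV where KV: "\<And>i. 1 \<le> i \<Longrightarrow> weight_sq_sum \<eta> \<alpha> i \<le> KV * real i powr (- \<alpha>)"
    using weight_sq_sum_le by blast
  obtain cT KT where cT: "0 < cT"
    and T: "\<And>j. 1 \<le> j \<Longrightarrow> cT \<le> discounted_weight_sq_sum \<eta> \<alpha> j \<and> discounted_weight_sq_sum \<eta> \<alpha> j \<le> KT"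
    using discounted_weight_sq_sum_bounds by blast
  obtain KP where KP: "\<And>N i. 1 \<le> i \<Longrightarrow> (\<Sum>n<N. Yprod \<eta> \<alpha> i (i + n)) \<le> KP * real i powr \<alpha>"
    using sum_Yprod_tail_le by blast
  define K where "K = Max {1, 1 / cV, KV, 1 / cY, exp \<eta>, 1 / cT, KT, KP}"
  have K: "1 \<le> K" "1 / cV \<le> K" "KV \<le> K" "1 / cY \<le> K" "exp \<eta> \<le> K" "1 / cT \<le> K" "KT \<le> K" "KP \<le> K"
    unfolding K_def by (rule Max_ge; simp)+
  have pos: "0 < cV" "0 < cY"
    unfolding cV_def cY_def using eta_pos by auto
  show ?thesis
  proof (rule that[OF K(1)])
    show "real i powr (- \<alpha>) \<le> K * weight_sq_sum \<eta> \<alpha> i" if "1 \<le> i" for i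
      using weight_sq_sum_ge[OF that, folded cV_def] pos(1) K(2) weight_sq_sum_nonneg
      by (rule le_mult_inverse_const)
    show "weight_sq_sum \<eta> \<alpha> i \<le> K * real i powr (- \<alpha>)" if "1 \<le> i" for i
      by (rule le_mult_const_mono[OF KV[OF that] K(3)]) simp
    show "exp (cum_step j - cum_step i) \<le> K * Yprod \<eta> \<alpha> j i" if "1 \<le> j" "j \<le> i" for i j
      using Yprod_ge_exp[OF that, folded cY_def] pos(2) K(4) Yprod_nonneg[OF that(1)]
      by (rule le_mult_inverse_const)
    show "Yprod \<eta> \<alpha> j i \<le> K * exp (cum_step j - cum_step i)" if "1 \<le> j" "j \<le> i" for i j
      by (rule le_mult_const_mono[OF Yprod_le_exp[OF that] K(5)]) simp
    show "1 \<le> K * discounted_weight_sq_sum \<eta> \<alpha> j" if "1 \<le> j" for j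
      by (rule le_mult_inverse_const[of cT]) (use T[OF that] cT K(6) in auto)
    show "discounted_weight_sq_sum \<eta> \<alpha> j \<le> K" if "1 \<le> j" for j
      using T[OF that] K(7) by auto
    show "(\<Sum>n<N. Yprod \<eta> \<alpha> i (i + n)) \<le> K * real i powr \<alpha>" if "1 \<le> i" for N i
      by (rule le_mult_const_mono[OF KP[OF that] K(8)]) simp
  qed
qed

lemma discounted_weight_sq_sum_nonneg: "0 \<le> discounted_weight_sq_sum \<eta> \<alpha> j"
  unfolding discounted_weight_sq_sum_def
  using Yprod_nonneg weight_sq_sum_nonneg by (intro sum_nonneg mult_nonneg_nonneg) auto

end

section \<open>Second-order structure of the iterates\<close>

lemma sgdX_eq_Yprod_sum:
  assumes "j \<le> i"
  shows "sgdX \<eta> \<alpha> x0 e i \<omega> = Yprod \<eta> \<alpha> j i * sgdX \<eta> \<alpha> x0 e j \<omega>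
           + (\<Sum>k\<in>{j+1..i}. Yprod \<eta> \<alpha> k i * stepsize \<eta> \<alpha> k * e k \<omega>)"
  using assms
proof (induction i rule: dec_induct)
  case (step i)
  have "(\<Sum>k\<in>{j+1..i}. Yprod \<eta> \<alpha> k (Suc i) * stepsize \<eta> \<alpha> k * e k \<omega>)
      = (1 - stepsize \<eta> \<alpha> (Suc i)) * (\<Sum>k\<in>{j+1..i}. Yprod \<eta> \<alpha> k i * stepsize \<eta> \<alpha> k * e k \<omega>)"
    unfolding sum_distrib_left by (intro sum.cong) (auto simp: Yprod_Suc)
  with step show ?case
    by (simp add: Yprod_Suc algebra_simps)
qed simp

lemma covar_sum_right:
  fixes f :: "'a \<Rightarrow> real"
  assumes "finite K" "\<And>k. k \<in> K \<Longrightarrow> integrable M (g k)"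
    and "\<And>k. k \<in> K \<Longrightarrow> integrable M (\<lambda>\<omega>. (f \<omega> - integral\<^sup>L M f) * (g k \<omega> - integral\<^sup>L M (g k)))"
  shows "covar M f (\<lambda>\<omega>. \<Sum>k\<in>K. g k \<omega>) = (\<Sum>k\<in>K. covar M f (g k))"
proof -
  have "integral\<^sup>L M (\<lambda>\<omega>. \<Sum>k\<in>K. g k \<omega>) = (\<Sum>k\<in>K. integral\<^sup>L M (g k))"
    using assms by (intro Bochner_Integration.integral_sum) auto
  then have "(\<lambda>\<omega>. (f \<omega> - integral\<^sup>L M f) * ((\<Sum>k\<in>K. g k \<omega>) - integral\<^sup>L M (\<lambda>\<omega>. \<Sum>k\<in>K. g k \<omega>)))
      = (\<lambda>\<omega>. \<Sum>k\<in>K. (f \<omega> - integral\<^sup>L M f) * (g k \<omega> - integral\<^sup>L M (g k)))"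
    by (simp add: sum_distrib_left sum_subtractf right_diff_distrib)
  then show ?thesis
    unfolding covar_def using assms by (simp add: Bochner_Integration.integral_sum)
qed

lemma
  fixes X Y :: "'a \<Rightarrow> real" and f :: "real \<Rightarrow> real"
  assumes "X \<in> borel_measurable M" "Y \<in> borel_measurable M" "distr M borel X = distr M borel Y"
    and "f \<in> borel_measurable borel"
  shows integrable_comp_distr_eq: "integrable M (\<lambda>\<omega>. f (X \<omega>)) \<longleftrightarrow> integrable M (\<lambda>\<omega>. f (Y \<omega>))"
    and integral_comp_distr_eq: "integral\<^sup>L M (\<lambda>\<omega>. f (X \<omega>)) = integral\<^sup>L M (\<lambda>\<omega>. f (Y \<omega>))"
  using integrable_distr_eq[of X M borel f] integrable_distr_eq[of Y M borel f]
    integral_distr[of X M borel f] integral_distr[of Y M borel f] assms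
  by simp_all

locale centered_iid = prob_space +
  fixes e :: "nat \<Rightarrow> 'a \<Rightarrow> real"
  assumes measurable_e: "\<And>i. 1 \<le> i \<Longrightarrow> e i \<in> borel_measurable M"
    and indep_e: "indep_vars (\<lambda>_. borel) e {1..}"
    and distr_e: "\<And>i. 1 \<le> i \<Longrightarrow> distr M borel (e i) = distr M borel (e 1)"
    and integrable_e1_sq: "integrable M (\<lambda>\<omega>. (e 1 \<omega>)\<^sup>2)"
    and expectation_e1: "expectation (e 1) = 0"
begin

definition noise_var :: real where
  "noise_var = expectation (\<lambda>\<omega>. (e 1 \<omega>)\<^sup>2)"

lemma integrable_e: "1 \<le> k \<Longrightarrow> integrable M (e k)"
  and expectation_e: "1 \<le> k \<Longrightarrow> expectation (e k) = 0"
  and integrable_e_sq: "1 \<le> k \<Longrightarrow> integrable M (\<lambda>\<omega>. (e k \<omega>)\<^sup>2)"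
  and expectation_e_sq: "1 \<le> k \<Longrightarrow> expectation (\<lambda>\<omega>. (e k \<omega>)\<^sup>2) = noise_var"
proof -
  assume k: "1 \<le> k"
  note same = measurable_e[OF k] measurable_e[of 1] distr_e[OF k]
  have id: "(\<lambda>x::real. x) \<in> borel_measurable borel" and sq: "(\<lambda>x::real. x\<^sup>2) \<in> borel_measurable borel"
    by measurable
  have "integrable M (e 1)"
    by (rule square_integrable_imp_integrable[OF measurable_e integrable_e1_sq]) simp
  then show "integrable M (e k)"
    using integrable_comp_distr_eq[OF same id] by simp
  show "expectation (e k) = 0"
    using integral_comp_distr_eq[OF same id] expectation_e1 by simp
  show "integrable M (\<lambda>\<omega>. (e k \<omega>)\<^sup>2)"
    using integrable_comp_distr_eq[OF same sq] integrable_e1_sq by simp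
  show "expectation (\<lambda>\<omega>. (e k \<omega>)\<^sup>2) = noise_var"
    using integral_comp_distr_eq[OF same sq] unfolding noise_var_def by simp
qed

lemma
  assumes "1 \<le> k" "1 \<le> l"
  shows integrable_e_mult: "integrable M (\<lambda>\<omega>. e k \<omega> * e l \<omega>)"
    and expectation_e_mult: "expectation (\<lambda>\<omega>. e k \<omega> * e l \<omega>) = (if k = l then noise_var else 0)"
proof -
  have "integrable M (\<lambda>\<omega>. e k \<omega> * e l \<omega>)
      \<and> expectation (\<lambda>\<omega>. e k \<omega> * e l \<omega>) = (if k = l then noise_var else 0)"
  proof (cases "k = l")
    case True
    then show ?thesis
      using integrable_e_sq[OF assms(1)] expectation_e_sq[OF assms(1)] by (simp add: power2_eq_square)
  next
    case False
    have indep: "indep_vars (\<lambda>_. borel) e {k, l}"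
      using assms by (intro indep_vars_subset[OF indep_e]) auto
    have "integrable M (\<lambda>\<omega>. \<Prod>i\<in>{k, l}. e i \<omega>)"
      using indep assms integrable_e by (intro indep_vars_integrable) auto
    moreover have "expectation (\<lambda>\<omega>. \<Prod>i\<in>{k, l}. e i \<omega>) = (\<Prod>i\<in>{k, l}. expectation (e i))"
      using indep assms integrable_e by (intro indep_vars_lebesgue_integral) auto
    ultimately show ?thesis
      using False expectation_e assms by simp
  qed
  then show "integrable M (\<lambda>\<omega>. e k \<omega> * e l \<omega>)"
    and "expectation (\<lambda>\<omega>. e k \<omega> * e l \<omega>) = (if k = l then noise_var else 0)" by auto
qed

lemma integrable_linear_form: "finite S \<Longrightarrow> S \<subseteq> {1..} \<Longrightarrow> integrable M (\<lambda>\<omega>. \<Sum>k\<in>S. b k * e k \<omega>)"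
  using integrable_e by (intro Bochner_Integration.integrable_sum integrable_mult_right) auto

lemma expectation_linear_form: "finite S \<Longrightarrow> S \<subseteq> {1..} \<Longrightarrow> expectation (\<lambda>\<omega>. \<Sum>k\<in>S. b k * e k \<omega>) = 0"
  using integrable_e expectation_e
  by (subst Bochner_Integration.integral_sum) (auto simp: subset_eq intro!: sum.neutral)

lemma
  assumes "finite S" "S \<subseteq> {1..}" "finite T" "T \<subseteq> {1..}"
  shows integrable_linear_form_mult:
      "integrable M (\<lambda>\<omega>. (\<Sum>k\<in>S. b k * e k \<omega>) * (\<Sum>l\<in>T. d l * e l \<omega>))"
    and expectation_linear_form_mult:
      "expectation (\<lambda>\<omega>. (\<Sum>k\<in>S. b k * e k \<omega>) * (\<Sum>l\<in>T. d l * e l \<omega>)) = noise_var * (\<Sum>k\<in>S \<inter> T. b k * d k)"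
proof -
  have prod: "(\<lambda>\<omega>. (\<Sum>k\<in>S. b k * e k \<omega>) * (\<Sum>l\<in>T. d l * e l \<omega>))
      = (\<lambda>\<omega>. \<Sum>k\<in>S. \<Sum>l\<in>T. b k * d l * (e k \<omega> * e l \<omega>))"
    by (simp add: sum_product mult_ac)
  have int: "integrable M (\<lambda>\<omega>. b k * d l * (e k \<omega> * e l \<omega>))" if "k \<in> S" "l \<in> T" for k l
    using that assms by (intro integrable_mult_right integrable_e_mult) auto
  show "integrable M (\<lambda>\<omega>. (\<Sum>k\<in>S. b k * e k \<omega>) * (\<Sum>l\<in>T. d l * e l \<omega>))"
    unfolding prod using int by (simp add: Bochner_Integration.integrable_sum)
  have "expectation (\<lambda>\<omega>. \<Sum>k\<in>S. \<Sum>l\<in>T. b k * d l * (e k \<omega> * e l \<omega>))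
      = (\<Sum>k\<in>S. \<Sum>l\<in>T. b k * d l * expectation (\<lambda>\<omega>. e k \<omega> * e l \<omega>))"
    using int by (simp add: Bochner_Integration.integral_sum Bochner_Integration.integrable_sum)
  also have "\<dots> = (\<Sum>k\<in>S. \<Sum>l\<in>T. if k = l then noise_var * (b k * d k) else 0)"
    using assms by (intro sum.cong refl) (auto simp: expectation_e_mult subset_eq)
  also have "\<dots> = (\<Sum>k\<in>S \<inter> T. noise_var * (b k * d k))"
    using assms by (simp add: sum.delta' sum.inter_restrict)
  also have "\<dots> = noise_var * (\<Sum>k\<in>S \<inter> T. b k * d k)"
    by (simp add: sum_distrib_left)
  finally show "expectation (\<lambda>\<omega>. (\<Sum>k\<in>S. b k * e k \<omega>) * (\<Sum>l\<in>T. d l * e l \<omega>))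
      = noise_var * (\<Sum>k\<in>S \<inter> T. b k * d k)"
    unfolding prod .
qed

lemma
  shows integrable_sgdX: "integrable M (sgdX \<eta> \<alpha> x0 e i)"
    and expectation_sgdX: "expectation (sgdX \<eta> \<alpha> x0 e i) = Yprod \<eta> \<alpha> 0 i * x0"
    and sgdX_minus_expectation: "sgdX \<eta> \<alpha> x0 e i \<omega> - expectation (sgdX \<eta> \<alpha> x0 e i)
          = (\<Sum>k\<in>{1..i}. (Yprod \<eta> \<alpha> k i * stepsize \<eta> \<alpha> k) * e k \<omega>)"
proof -
  have X: "sgdX \<eta> \<alpha> x0 e i
      = (\<lambda>\<omega>. Yprod \<eta> \<alpha> 0 i * x0 + (\<Sum>k\<in>{1..i}. (Yprod \<eta> \<alpha> k i * stepsize \<eta> \<alpha> k) * e k \<omega>))"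
    using sgdX_eq_Yprod_sum[of 0 i] by fastforce
  have "integrable M (\<lambda>\<omega>. \<Sum>k\<in>{1..i}. (Yprod \<eta> \<alpha> k i * stepsize \<eta> \<alpha> k) * e k \<omega>)"
    and "expectation (\<lambda>\<omega>. \<Sum>k\<in>{1..i}. (Yprod \<eta> \<alpha> k i * stepsize \<eta> \<alpha> k) * e k \<omega>) = 0"
    by (auto intro!: integrable_linear_form expectation_linear_form)
  then show "integrable M (sgdX \<eta> \<alpha> x0 e i)"
    and "expectation (sgdX \<eta> \<alpha> x0 e i) = Yprod \<eta> \<alpha> 0 i * x0"
    and "sgdX \<eta> \<alpha> x0 e i \<omega> - expectation (sgdX \<eta> \<alpha> x0 e i)
          = (\<Sum>k\<in>{1..i}. (Yprod \<eta> \<alpha> k i * stepsize \<eta> \<alpha> k) * e k \<omega>)"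
    unfolding X by (simp_all add: prob_space)
qed

lemma integrable_centered_sgdX_mult:
  "integrable M (\<lambda>\<omega>. (sgdX \<eta> \<alpha> x0 e a \<omega> - expectation (sgdX \<eta> \<alpha> x0 e a))
                     * (sgdX \<eta> \<alpha> x0 e b \<omega> - expectation (sgdX \<eta> \<alpha> x0 e b)))"
  unfolding sgdX_minus_expectation by (rule integrable_linear_form_mult) auto

lemma covar_sgdX:
  assumes "b \<le> a"
  shows "covar M (sgdX \<eta> \<alpha> x0 e a) (sgdX \<eta> \<alpha> x0 e b)
           = noise_var * Yprod \<eta> \<alpha> b a * weight_sq_sum \<eta> \<alpha> b"
proof -
  have "covar M (sgdX \<eta> \<alpha> x0 e a) (sgdX \<eta> \<alpha> x0 e b)
      = noise_var * (\<Sum>k\<in>{1..a} \<inter> {1..b}. (Yprod \<eta> \<alpha> k a * stepsize \<eta> \<alpha> k) * (Yprod \<eta> \<alpha> k b * stepsize \<eta> \<alpha> k))"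
    unfolding covar_def sgdX_minus_expectation by (rule expectation_linear_form_mult) auto
  also have "\<dots> = noise_var * (\<Sum>k\<in>{1..b}. Yprod \<eta> \<alpha> b a * (Yprod \<eta> \<alpha> k b * stepsize \<eta> \<alpha> k)\<^sup>2)"
  proof -
    have "{1..a} \<inter> {1..b} = {1..b}"
      using assms by auto
    moreover have "(\<Sum>k\<in>{1..b}. (Yprod \<eta> \<alpha> k a * stepsize \<eta> \<alpha> k) * (Yprod \<eta> \<alpha> k b * stepsize \<eta> \<alpha> k))
        = (\<Sum>k\<in>{1..b}. Yprod \<eta> \<alpha> b a * (Yprod \<eta> \<alpha> k b * stepsize \<eta> \<alpha> k)\<^sup>2)"
    proof (rule sum.cong)
      fix k assume "k \<in> {1..b}"
      with assms have "Yprod \<eta> \<alpha> k a = Yprod \<eta> \<alpha> k b * Yprod \<eta> \<alpha> b a"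
        by (intro Yprod_trans) auto
      then show "(Yprod \<eta> \<alpha> k a * stepsize \<eta> \<alpha> k) * (Yprod \<eta> \<alpha> k b * stepsize \<eta> \<alpha> k)
          = Yprod \<eta> \<alpha> b a * (Yprod \<eta> \<alpha> k b * stepsize \<eta> \<alpha> k)\<^sup>2"
        by (simp add: power2_eq_square)
    qed simp
    ultimately show ?thesis
      by (simp only:)
  qed
  finally show ?thesis
    unfolding weight_sq_sum_def by (simp add: sum_distrib_left mult.assoc)
qed

lemma covar_sgdX_shift:
  assumes "j \<le> i"
  shows "covar M (sgdX \<eta> \<alpha> x0 e (i + n)) (sgdX \<eta> \<alpha> x0 e j)
           = noise_var * weight_sq_sum \<eta> \<alpha> j * Yprod \<eta> \<alpha> j i * Yprod \<eta> \<alpha> i (i + n)"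
proof -
  have "Yprod \<eta> \<alpha> j (i + n) = Yprod \<eta> \<alpha> j i * Yprod \<eta> \<alpha> i (i + n)"
    using assms by (intro Yprod_trans) auto
  with assms show ?thesis
    by (simp add: covar_sgdX mult_ac)
qed

lemma var_sgdX: "var M (sgdX \<eta> \<alpha> x0 e a) = noise_var * weight_sq_sum \<eta> \<alpha> a"
  using covar_sgdX[where a = a and b = a] unfolding covar_def var_def by (simp add: power2_eq_square)

lemma second_moment_sgdX:
  "expectation (\<lambda>\<omega>. (sgdX \<eta> \<alpha> x0 e a \<omega>)\<^sup>2) = (Yprod \<eta> \<alpha> 0 a * x0)\<^sup>2 + noise_var * weight_sq_sum \<eta> \<alpha> a"
proof -
  let ?X = "sgdX \<eta> \<alpha> x0 e a"
  have "(\<lambda>\<omega>. (?X \<omega>)\<^sup>2) = (\<lambda>\<omega>. (?X \<omega> - expectation ?X) * (?X \<omega> - expectation ?X)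
      + 2 * expectation ?X * ?X \<omega> - (expectation ?X)\<^sup>2)"
    by (simp add: algebra_simps power2_eq_square)
  then have "integrable M (\<lambda>\<omega>. (?X \<omega>)\<^sup>2)"
    using integrable_centered_sgdX_mult[where a = a and b = a] integrable_sgdX[where i = a] by simp
  then have "var M ?X = expectation (\<lambda>\<omega>. (?X \<omega>)\<^sup>2) - (expectation ?X)\<^sup>2"
    unfolding var_def using integrable_sgdX by (rule variance_eq[rotated])
  then show ?thesis
    using var_sgdX[where a = a] expectation_sgdX[where i = a] by simp
qed

lemma covar_sgdX_sum:
  assumes "j \<le> i"
  shows "covar M (sgdX \<eta> \<alpha> x0 e i) (\<lambda>\<omega>. \<Sum>k\<in>{1..j}. sgdX \<eta> \<alpha> x0 e k \<omega>)
           = noise_var * Yprod \<eta> \<alpha> j i * discounted_weight_sq_sum \<eta> \<alpha> j"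
proof -
  have "covar M (sgdX \<eta> \<alpha> x0 e i) (\<lambda>\<omega>. \<Sum>k\<in>{1..j}. sgdX \<eta> \<alpha> x0 e k \<omega>)
      = (\<Sum>k\<in>{1..j}. covar M (sgdX \<eta> \<alpha> x0 e i) (sgdX \<eta> \<alpha> x0 e k))"
    using integrable_sgdX integrable_centered_sgdX_mult by (intro covar_sum_right) auto
  also have "\<dots> = (\<Sum>k\<in>{1..j}. noise_var * Yprod \<eta> \<alpha> j i * (Yprod \<eta> \<alpha> k j * weight_sq_sum \<eta> \<alpha> k))"
  proof (intro sum.cong refl)
    fix k assume "k \<in> {1..j}"
    then have "Yprod \<eta> \<alpha> k i = Yprod \<eta> \<alpha> k j * Yprod \<eta> \<alpha> j i"
      using assms by (intro Yprod_trans) auto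
    with \<open>k \<in> {1..j}\<close> assms show "covar M (sgdX \<eta> \<alpha> x0 e i) (sgdX \<eta> \<alpha> x0 e k)
        = noise_var * Yprod \<eta> \<alpha> j i * (Yprod \<eta> \<alpha> k j * weight_sq_sum \<eta> \<alpha> k)"
      by (simp add: covar_sgdX mult_ac)
  qed
  finally show ?thesis
    unfolding discounted_weight_sq_sum_def by (simp add: sum_distrib_left)
qed

end

section \<open>Asymptotics of the covariances\<close>

text \<open>
  Each estimate is stated for all sufficiently large constants \<open>C\<close>, that is, as an
  \<open>eventually \<dots> at_top\<close> property, so that the four of them combine into a single constant.
\<close>

locale sgd_setting = polynomial_stepsizes \<eta> \<alpha> + centered_iid M e
  for \<eta> \<alpha> :: real and M :: "'a measure" and e :: "nat \<Rightarrow> 'a \<Rightarrow> real" +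
  fixes x0 :: real
  assumes noise_var_pos: "0 < noise_var"
begin

abbreviation X :: "nat \<Rightarrow> 'a \<Rightarrow> real" where
  "X \<equiv> sgdX \<eta> \<alpha> x0 e"

lemma var_le_second_moment: "var M (X i) \<le> expectation (\<lambda>\<omega>. (X i \<omega>)\<^sup>2)"
  using var_sgdX[where a = i] second_moment_sgdX[where a = i] by simp

lemma second_moment_le_var:
  assumes "1 \<le> i"
  shows "expectation (\<lambda>\<omega>. (X i \<omega>)\<^sup>2) \<le> (1 + ((1 - \<eta>) * x0 / \<eta>)\<^sup>2 / noise_var) * var M (X i)"
proof -
  have "(Yprod \<eta> \<alpha> 0 i * x0)\<^sup>2 \<le> ((1 - \<eta>) * x0 / \<eta>)\<^sup>2 * weight_sq_sum \<eta> \<alpha> i"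
    using assms eta_pos by (intro Yprod_0_sq_le_weight_sq_sum) auto
  moreover have "(1 + ((1 - \<eta>) * x0 / \<eta>)\<^sup>2 / noise_var) * var M (X i)
      = noise_var * weight_sq_sum \<eta> \<alpha> i + ((1 - \<eta>) * x0 / \<eta>)\<^sup>2 * weight_sq_sum \<eta> \<alpha> i"
    unfolding var_sgdX using noise_var_pos by (simp add: field_simps)
  ultimately show ?thesis
    unfolding second_moment_sgdX by linarith
qed

lemma second_moment_asymp:
  "\<forall>\<^sub>F C in at_top. \<forall>i\<ge>1.
      var M (X i) \<le> C * expectation (\<lambda>\<omega>. (X i \<omega>)\<^sup>2)
    \<and> expectation (\<lambda>\<omega>. (X i \<omega>)\<^sup>2) \<le> C * var M (X i)
    \<and> expectation (\<lambda>\<omega>. (X i \<omega>)\<^sup>2) \<le> C * real i powr (- \<alpha>)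
    \<and> real i powr (- \<alpha>) \<le> C * expectation (\<lambda>\<omega>. (X i \<omega>)\<^sup>2)
    \<and> var M (X i) \<le> C * real i powr (- \<alpha>)
    \<and> real i powr (- \<alpha>) \<le> C * var M (X i)"
proof -
  obtain K where K: "1 \<le> K"
    and V: "\<And>i. 1 \<le> i \<Longrightarrow> real i powr (- \<alpha>) \<le> K * weight_sq_sum \<eta> \<alpha> i"
      "\<And>i. 1 \<le> i \<Longrightarrow> weight_sq_sum \<eta> \<alpha> i \<le> K * real i powr (- \<alpha>)"
    by (rule stepsize_weight_bounds) blast
  define \<sigma> where "\<sigma> = noise_var"
  define c where "c = 1 + ((1 - \<eta>) * x0 / \<eta>)\<^sup>2 / \<sigma>"
  have \<sigma>: "0 < \<sigma>" and c: "1 \<le> c"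
    unfolding \<sigma>_def c_def using noise_var_pos by auto
  show ?thesis
    unfolding eventually_at_top_linorder
  proof (intro exI[of _ "max c (max (c * (\<sigma> * K)) (K / \<sigma>))"] allI impI)
    fix C :: real and i :: nat
    assume C: "max c (max (c * (\<sigma> * K)) (K / \<sigma>)) \<le> C" and i: "1 \<le> i"
    have var: "var M (X i) = \<sigma> * weight_sq_sum \<eta> \<alpha> i"
      unfolding \<sigma>_def by (rule var_sgdX)
    have "expectation (\<lambda>\<omega>. (X i \<omega>)\<^sup>2) \<le> c * var M (X i)"
      unfolding c_def \<sigma>_def using i by (rule second_moment_le_var)
    moreover have "var M (X i) \<le> (\<sigma> * K) * real i powr (- \<alpha>)"
      unfolding var using mult_left_mono[OF V(2)[OF i], of \<sigma>] \<sigma> by (simp add: mult.assoc)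
    moreover have "real i powr (- \<alpha>) \<le> K / \<sigma> * var M (X i)"
      unfolding var using V(1)[OF i] \<sigma> by simp
    moreover have "0 \<le> var M (X i)" "0 \<le> \<sigma> * K" "0 \<le> K / \<sigma>"
      unfolding var using \<sigma> K weight_sq_sum_nonneg by simp_all
    ultimately show "var M (X i) \<le> C * expectation (\<lambda>\<omega>. (X i \<omega>)\<^sup>2)
      \<and> expectation (\<lambda>\<omega>. (X i \<omega>)\<^sup>2) \<le> C * var M (X i)
      \<and> expectation (\<lambda>\<omega>. (X i \<omega>)\<^sup>2) \<le> C * real i powr (- \<alpha>)
      \<and> real i powr (- \<alpha>) \<le> C * expectation (\<lambda>\<omega>. (X i \<omega>)\<^sup>2)
      \<and> var M (X i) \<le> C * real i powr (- \<alpha>)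
      \<and> real i powr (- \<alpha>) \<le> C * var M (X i)"
      using var_le_second_moment c C by (intro two_sided_bounds_trans) auto
  qed
qed

lemma covar_asymp:
  "\<forall>\<^sub>F C in at_top. \<forall>i j. 1 \<le> j \<and> j < i \<longrightarrow>
      0 \<le> covar M (X i) (X j)
    \<and> covar M (X i) (X j) \<le> C * (exp (cum_step j - cum_step i) * real j powr (- \<alpha>))
    \<and> exp (cum_step j - cum_step i) * real j powr (- \<alpha>) \<le> C * covar M (X i) (X j)
    \<and> exp (cum_step j - cum_step i) * real j powr (- \<alpha>)
        \<le> exp (- \<eta> * real i powr (- \<alpha>) * (real i - real j)) * real j powr (- \<alpha>)"
proof -
  obtain K where K: "1 \<le> K"
    and V: "\<And>i. 1 \<le> i \<Longrightarrow> real i powr (- \<alpha>) \<le> K * weight_sq_sum \<eta> \<alpha> i"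
      "\<And>i. 1 \<le> i \<Longrightarrow> weight_sq_sum \<eta> \<alpha> i \<le> K * real i powr (- \<alpha>)"
    and Y: "\<And>i j. 1 \<le> j \<Longrightarrow> j \<le> i \<Longrightarrow> exp (cum_step j - cum_step i) \<le> K * Yprod \<eta> \<alpha> j i"
      "\<And>i j. 1 \<le> j \<Longrightarrow> j \<le> i \<Longrightarrow> Yprod \<eta> \<alpha> j i \<le> K * exp (cum_step j - cum_step i)"
    by (rule stepsize_weight_bounds) blast
  define \<sigma> where "\<sigma> = noise_var"
  have \<sigma>: "0 < \<sigma>"
    unfolding \<sigma>_def by (rule noise_var_pos)
  show ?thesis
    unfolding eventually_at_top_linorder
  proof (intro exI[of _ "max (\<sigma> * K\<^sup>2) (K\<^sup>2 / \<sigma>)"] allI impI conjI)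
    fix C :: real and i j :: nat
    assume C: "max (\<sigma> * K\<^sup>2) (K\<^sup>2 / \<sigma>) \<le> C" and ij: "1 \<le> j \<and> j < i"
    let ?A = "exp (cum_step j - cum_step i)" and ?Y = "Yprod \<eta> \<alpha> j i"
      and ?V = "weight_sq_sum \<eta> \<alpha> j" and ?w = "real j powr (- \<alpha>)"
    have cov: "covar M (X i) (X j) = \<sigma> * (?Y * ?V)"
      using covar_sgdX[where a = i and b = j] ij unfolding \<sigma>_def by (simp add: mult.assoc)
    have nonneg: "0 \<le> ?Y" "0 \<le> ?V" "0 \<le> ?w" "0 \<le> ?A * ?w" "0 \<le> covar M (X i) (X j)"
      unfolding cov using Yprod_nonneg[of j i] ij weight_sq_sum_nonneg \<sigma> by auto
    have C_ge: "\<sigma> * K\<^sup>2 \<le> C" "K\<^sup>2 / \<sigma> \<le> C"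
      using C by simp_all
    have "?Y * ?V \<le> (K * ?A) * (K * ?w)"
      using Y(2)[of j i] V(2)[of j] ij nonneg K by (intro mult_mono) auto
    then have upper: "covar M (X i) (X j) \<le> \<sigma> * K\<^sup>2 * (?A * ?w)"
      unfolding cov using \<sigma> by (simp add: power2_eq_square mult_ac mult_left_mono)
    have "?A * ?w \<le> (K * ?Y) * (K * ?V)"
      using Y(1)[of j i] V(1)[of j] ij nonneg K by (intro mult_mono) auto
    then have lower: "?A * ?w \<le> K\<^sup>2 / \<sigma> * covar M (X i) (X j)"
      unfolding cov using \<sigma> by (simp add: power2_eq_square mult_ac)
    show "0 \<le> covar M (X i) (X j)"
      by (fact nonneg(5))
    show "covar M (X i) (X j) \<le> C * (?A * ?w)"
      by (rule le_mult_const_mono[OF upper C_ge(1) nonneg(4)])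
    show "?A * ?w \<le> C * covar M (X i) (X j)"
      by (rule le_mult_const_mono[OF lower C_ge(2) nonneg(5)])
    show "?A * ?w \<le> exp (- \<eta> * real i powr (- \<alpha>) * (real i - real j)) * ?w"
      using exp_cum_step_diff_le[of j i] ij by (intro mult_right_mono) auto
  qed
qed

lemma covar_partial_sum_asymp:
  "\<forall>\<^sub>F C in at_top. \<forall>i j. 1 \<le> j \<and> j < i \<longrightarrow>
      covar M (X i) (\<lambda>\<omega>. \<Sum>k\<in>{1..j}. X k \<omega>) \<le> C * exp (cum_step j - cum_step i)
    \<and> exp (cum_step j - cum_step i) \<le> C * covar M (X i) (\<lambda>\<omega>. \<Sum>k\<in>{1..j}. X k \<omega>)
    \<and> exp (cum_step j - cum_step i) \<le> exp (- \<eta> * real i powr (- \<alpha>) * (real i - real j))"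
proof -
  obtain K where K: "1 \<le> K"
    and Y: "\<And>i j. 1 \<le> j \<Longrightarrow> j \<le> i \<Longrightarrow> exp (cum_step j - cum_step i) \<le> K * Yprod \<eta> \<alpha> j i"
      "\<And>i j. 1 \<le> j \<Longrightarrow> j \<le> i \<Longrightarrow> Yprod \<eta> \<alpha> j i \<le> K * exp (cum_step j - cum_step i)"
    and T: "\<And>j. 1 \<le> j \<Longrightarrow> 1 \<le> K * discounted_weight_sq_sum \<eta> \<alpha> j"
      "\<And>j. 1 \<le> j \<Longrightarrow> discounted_weight_sq_sum \<eta> \<alpha> j \<le> K"
    by (rule stepsize_weight_bounds) blast
  define \<sigma> where "\<sigma> = noise_var"
  have \<sigma>: "0 < \<sigma>"
    unfolding \<sigma>_def by (rule noise_var_pos)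
  show ?thesis
    unfolding eventually_at_top_linorder
  proof (intro exI[of _ "max (\<sigma> * K\<^sup>2) (K\<^sup>2 / \<sigma>)"] allI impI conjI)
    fix C :: real and i j :: nat
    assume C: "max (\<sigma> * K\<^sup>2) (K\<^sup>2 / \<sigma>) \<le> C" and ij: "1 \<le> j \<and> j < i"
    let ?A = "exp (cum_step j - cum_step i)" and ?Y = "Yprod \<eta> \<alpha> j i"
      and ?T = "discounted_weight_sq_sum \<eta> \<alpha> j" and ?S = "\<lambda>\<omega>. \<Sum>k\<in>{1..j}. X k \<omega>"
    have cov: "covar M (X i) ?S = \<sigma> * (?Y * ?T)"
      using covar_sgdX_sum[where i = i and j = j] ij unfolding \<sigma>_def by (simp add: mult.assoc)
    have nonneg: "0 \<le> ?Y" "0 \<le> ?T" "0 \<le> ?A" "0 \<le> covar M (X i) ?S"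
      unfolding cov using Yprod_nonneg[of j i] discounted_weight_sq_sum_nonneg ij \<sigma> by auto
    have C_ge: "\<sigma> * K\<^sup>2 \<le> C" "K\<^sup>2 / \<sigma> \<le> C"
      using C by simp_all
    have "?Y * ?T \<le> (K * ?A) * K"
      using Y(2)[of j i] T(2)[of j] ij nonneg K by (intro mult_mono) auto
    then have upper: "covar M (X i) ?S \<le> \<sigma> * K\<^sup>2 * ?A"
      unfolding cov using \<sigma> by (simp add: power2_eq_square mult_ac mult_left_mono)
    have "?A * 1 \<le> (K * ?Y) * (K * ?T)"
      using Y(1)[of j i] T(1)[of j] ij nonneg K by (intro mult_mono) auto
    then have lower: "?A \<le> K\<^sup>2 / \<sigma> * covar M (X i) ?S"
      unfolding cov using \<sigma> by (simp add: power2_eq_square mult_ac)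
    show "covar M (X i) ?S \<le> C * ?A"
      by (rule le_mult_const_mono[OF upper C_ge(1) nonneg(3)])
    show "?A \<le> C * covar M (X i) ?S"
      by (rule le_mult_const_mono[OF lower C_ge(2) nonneg(4)])
    show "?A \<le> exp (- \<eta> * real i powr (- \<alpha>) * (real i - real j))"
      using exp_cum_step_diff_le[of j i] ij by simp
  qed
qed

lemma tail_covar_asymp:
  "\<forall>\<^sub>F C in at_top. \<forall>i j. 1 \<le> j \<and> j < i \<longrightarrow>
      summable (\<lambda>n. covar M (X (i + n)) (X j))
    \<and> (\<Sum>n. covar M (X (i + n)) (X j))
        \<le> C * (exp (cum_step j - cum_step i) * real i powr \<alpha> * real j powr (- \<alpha>))
    \<and> exp (cum_step j - cum_step i) * real i powr \<alpha> * real j powr (- \<alpha>)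
        \<le> exp (- \<eta> * real i powr (- \<alpha>) * (real i - real j)) * real i powr \<alpha> * real j powr (- \<alpha>)"
proof -
  obtain K where K: "1 \<le> K"
    and V: "\<And>i. 1 \<le> i \<Longrightarrow> weight_sq_sum \<eta> \<alpha> i \<le> K * real i powr (- \<alpha>)"
    and Y: "\<And>i j. 1 \<le> j \<Longrightarrow> j \<le> i \<Longrightarrow> Yprod \<eta> \<alpha> j i \<le> K * exp (cum_step j - cum_step i)"
    and P: "\<And>N i. 1 \<le> i \<Longrightarrow> (\<Sum>n<N. Yprod \<eta> \<alpha> i (i + n)) \<le> K * real i powr \<alpha>"
    by (rule stepsize_weight_bounds) blast
  define \<sigma> where "\<sigma> = noise_var"
  have \<sigma>: "0 < \<sigma>"
    unfolding \<sigma>_def by (rule noise_var_pos)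
  show ?thesis
    unfolding eventually_at_top_linorder
  proof (intro exI[of _ "\<sigma> * K ^ 3"] allI impI conjI)
    fix C :: real and i j :: nat
    assume C: "\<sigma> * K ^ 3 \<le> C" and ij: "1 \<le> j \<and> j < i"
    let ?A = "exp (cum_step j - cum_step i)" and ?Y = "Yprod \<eta> \<alpha> j i"
      and ?V = "weight_sq_sum \<eta> \<alpha> j" and ?w = "real j powr (- \<alpha>)"
    define c where "c = \<sigma> * ?V * ?Y"
    have nonneg: "0 \<le> ?Y" "0 \<le> ?V" "0 \<le> c" "\<And>n. 0 \<le> Yprod \<eta> \<alpha> i (i + n)"
      unfolding c_def using Yprod_nonneg ij weight_sq_sum_nonneg \<sigma> by auto
    have cov: "covar M (X (i + n)) (X j) = c * Yprod \<eta> \<alpha> i (i + n)" for n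
      unfolding c_def \<sigma>_def using ij by (simp add: covar_sgdX_shift)
    have partial: "(\<Sum>n<N. covar M (X (i + n)) (X j)) \<le> c * (K * real i powr \<alpha>)" for N
      unfolding cov sum_distrib_left[symmetric] using P[of i N] ij nonneg by (intro mult_left_mono) auto
    show summable: "summable (\<lambda>n. covar M (X (i + n)) (X j))"
    proof (rule bounded_imp_summable)
      show "0 \<le> covar M (X (i + n)) (X j)" for n
        unfolding cov using nonneg by simp
      show "(\<Sum>k\<le>n. covar M (X (i + k)) (X j)) \<le> c * (K * real i powr \<alpha>)" for n
        using partial[of "Suc n"] by (simp add: lessThan_Suc_atMost)
    qed
    have "(\<Sum>n. covar M (X (i + n)) (X j)) \<le> c * (K * real i powr \<alpha>)"
      using summable partial by (rule suminf_le_const)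
    also have "\<dots> \<le> \<sigma> * (K * ?w) * (K * ?A) * (K * real i powr \<alpha>)"
      unfolding c_def using V[of j] Y[of j i] ij nonneg \<sigma> K
      by (intro mult_right_mono mult_left_mono mult_mono) auto
    also have "\<dots> = \<sigma> * K ^ 3 * (?A * real i powr \<alpha> * ?w)"
      by (simp add: power3_eq_cube mult_ac)
    also have "\<dots> \<le> C * (?A * real i powr \<alpha> * ?w)"
      using C by (intro mult_right_mono) auto
    finally show "(\<Sum>n. covar M (X (i + n)) (X j)) \<le> C * (?A * real i powr \<alpha> * ?w)" .
    show "?A * real i powr \<alpha> * ?w \<le> exp (- \<eta> * real i powr (- \<alpha>) * (real i - real j)) * real i powr \<alpha> * ?w"
      using exp_cum_step_diff_le[of j i] ij by (intro mult_right_mono) auto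
  qed
qed

end

theorem lemmaC1:
  fixes M :: "'a measure" and e :: "nat \<Rightarrow> 'a \<Rightarrow> real"
    and \<eta> \<alpha> x0 :: real
  assumes P: "prob_space M"
    and eta_pos: "\<eta> > 0"
    and eta_small: "\<eta> < 2 powr \<alpha>"
    and alpha: "1/2 < \<alpha>" "\<alpha> < 1"
    and meas: "\<And>i. i \<ge> 1 \<Longrightarrow> e i \<in> borel_measurable M"
    and indep: "prob_space.indep_vars M (\<lambda>_. borel) e {1..}"
    and ident: "\<And>i. i \<ge> 1 \<Longrightarrow> distr M borel (e i) = distr M borel (e 1)"
    and sq_int: "integrable M (\<lambda>\<omega>. (e 1 \<omega>)\<^sup>2)"
    and mean0: "integral\<^sup>L M (e 1) = 0"
    and sq_pos: "integral\<^sup>L M (\<lambda>\<omega>. (e 1 \<omega>)\<^sup>2) > 0"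
  shows
    "(\<forall>i j \<omega>. j < i \<longrightarrow>
        sgdX \<eta> \<alpha> x0 e i \<omega> = Yprod \<eta> \<alpha> j i * sgdX \<eta> \<alpha> x0 e j \<omega>
          + (\<Sum>k\<in>{j+1..i}. Yprod \<eta> \<alpha> k i * stepsize \<eta> \<alpha> k * e k \<omega>))
     \<and> (\<exists>C>0. \<forall>i j. 1 \<le> j \<and> j < i \<longrightarrow>
        (let X = sgdX \<eta> \<alpha> x0 e;
             A = exp (\<eta> / (1 - \<alpha>) * (real j powr (1 - \<alpha>) - real i powr (1 - \<alpha>)));
             B = exp (- \<eta> * real i powr (- \<alpha>) * (real i - real j))
         in
          \<comment> \<open>(1)\<close>
          var M (X i) \<le> C * integral\<^sup>L M (\<lambda>\<omega>. (X i \<omega>)\<^sup>2)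
          \<and> integral\<^sup>L M (\<lambda>\<omega>. (X i \<omega>)\<^sup>2) \<le> C * var M (X i)
          \<and> integral\<^sup>L M (\<lambda>\<omega>. (X i \<omega>)\<^sup>2) \<le> C * real i powr (- \<alpha>)
          \<and> real i powr (- \<alpha>) \<le> C * integral\<^sup>L M (\<lambda>\<omega>. (X i \<omega>)\<^sup>2)
          \<and> var M (X i) \<le> C * real i powr (- \<alpha>)
          \<and> real i powr (- \<alpha>) \<le> C * var M (X i)
          \<comment> \<open>(2)\<close>
          \<and> 0 \<le> covar M (X i) (X j)
          \<and> covar M (X i) (X j) \<le> C * (A * real j powr (- \<alpha>))
          \<and> A * real j powr (- \<alpha>) \<le> C * covar M (X i) (X j)
          \<and> A * real j powr (- \<alpha>) \<le> B * real j powr (- \<alpha>)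
          \<comment> \<open>(3)\<close>
          \<and> covar M (X i) (\<lambda>\<omega>. \<Sum>k\<in>{1..j}. X k \<omega>) \<le> C * A
          \<and> A \<le> C * covar M (X i) (\<lambda>\<omega>. \<Sum>k\<in>{1..j}. X k \<omega>)
          \<and> A \<le> B
          \<comment> \<open>(4)\<close>
          \<and> summable (\<lambda>n. covar M (X (i + n)) (X j))
          \<and> (\<Sum>n. covar M (X (i + n)) (X j))
                \<le> C * (A * real i powr \<alpha> * real j powr (- \<alpha>))
          \<and> A * real i powr \<alpha> * real j powr (- \<alpha>)
                \<le> B * real i powr \<alpha> * real j powr (- \<alpha>)))"
proof -
  have iid: "centered_iid M e"
    by (intro centered_iid.intro centered_iid_axioms.intro) (fact assms)+
  interpret sgd_setting \<eta> \<alpha> M e x0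
  proof (intro sgd_setting.intro polynomial_stepsizes.intro sgd_setting_axioms.intro iid)
    show "0 < centered_iid.noise_var M e"
      using sq_pos by (simp add: centered_iid.noise_var_def[OF iid])
  qed (fact assms)+
  have A: "exp (\<eta> / (1 - \<alpha>) * (real j powr (1 - \<alpha>) - real i powr (1 - \<alpha>)))
      = exp (cum_step j - cum_step i)" for i j :: nat
    unfolding cum_step_def by (simp add: right_diff_distrib)
  note asymp = eventually_conj[OF eventually_gt_at_top[of 0]
      eventually_conj[OF second_moment_asymp
        eventually_conj[OF covar_asymp eventually_conj[OF covar_partial_sum_asymp tail_covar_asymp]]]]
  show ?thesis
    unfolding Let_def A
    by (intro conjI ex_forward[OF eventually_happens'[OF trivial_limit_at_top_linorder asymp]]
        allI impI sgdX_eq_Yprod_sum) auto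
qed

end
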